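(* In the linear mixture MDP setting with Algorithm 1 as described in the context, with probability at least $1-\delta$, $\tilde V_h^*(s,R_k)\le V_{k,h}(s)$ holds for all $s\in\mathcal{S}$, $h\in[H]$ and $k\in[K]$, where $R_k=\{R_{k,h}\}_h$ is the exploration-driven reward of episode $k$.
   Context: Episodic MDP with state set $\mathcal{S}$, action set $\mathcal{A}$, horizon $H$, transitions $P_h(\cdot|s,a)$, fixed initial state $s_1$. For a nonnegative reward $R=\{R_h\}$ define $\tilde V^*_{H+1}(\cdot,R)=0$ and $\tilde V^*_h(s,R)=\max_{a}\min\{R_h(s,a)+\sum_{s'}P_h(s'|s,a)\tilde V^*_{h+1}(s',R),H\}$. Linear mixture MDP: known $\phi:\mathcal{S}\times\mathcal{A}\times\mathcal{S}\to\mathbb{R}^d$ with $\|\sum_{s'}\phi(s,a,s')V(s')\|_2\le1$ for all $V:\mathcal{S}\to[0,1]$, and unknown $\theta_h$, $\|\theta_h\|_2\le B$, with $P_h(s'|s,a)=\theta_h^\top\phi(s,a,s')$. $\|x\|_M=\sqrt{x^\top Mx}$. Algorithm 1 (run for $K$ episodes, with failure probability $\delta$): $\lambda=B^{-2}$, $\beta=H\sqrt{d\log(4H^3K\lambda^{-1}\delta^{-1})}+\sqrt\lambda B$, $\mathcal{V}=\{V:\mathcal{S}\to[0,H]\}$. For $k=1,\dots,K$: $V_{k,H+1}\equiv0$; for $h=H,\dots,1$: $\Lambda_{k,h}=\sum_{t<k}\phi_{t,h}(s_{t,h},a_{t,h})\phi_{t,h}(s_{t,h},a_{t,h})^\top+\lambda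 I$; $\hat\theta_{k,h}=\Lambda_{k,h}^{-1}\sum_{t<k}\phi_{t,h}(s_{t,h},a_{t,h})\tilde V_{t,h+1,s_{t,h},a_{t,h}}(s_{t,h+1})$; $\tilde V_{k,h+1,s,a}\in\arg\max_{V\in\mathcal{V}}\|\sum_{s'}\phi(s,a,s')V(s')\|_{\Lambda_{k,h}^{-1}}$; $\phi_{k,h}(s,a)=\sum_{s'}\phi(s,a,s')\tilde V_{k,h+1,s,a}(s')$; $u_{k,h}(s,a)=\beta\|\phi_{k,h}(s,a)\|_{\Lambda_{k,h}^{-1}}$; $R_{k,h}=u_{k,h}$; $Q_{k,h}(s,a)=\min\{\hat\theta_{k,h}^\top\sum_{s'}\phi(s,a,s')V_{k,h+1}(s')+R_{k,h}(s,a)+u_{k,h}(s,a),H\}$; $V_{k,h}(s)=\max_aQ_{k,h}(s,a)$, $\pi_{k,h}(s)\in\arg\max_aQ_{k,h}(s,a)$. Then $\pi_k$ is executed from $s_1$, producing $s_{k,h+1}\sim P_h(\cdot|s_{k,h},a_{k,h})$, $a_{k,h}=\pi_{k,h}(s_{k,h})$. *)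

theory Defs
  imports "HOL-Analysis.Analysis" "HOL-Probability.Probability"
begin

text \<open>Episodes: an episode is a list of length H+1 of state/action pairs; its
(h-1)-th entry (0-based) is (s_h, a_h), h = 1..H+1 (the action at step H+1 is unused).
Episodes of the run are indexed by t = 1,2,...\<close>

type_synonym ('s,'a) episode = "('s \<times> 'a) list"

definition st :: "(nat \<Rightarrow> ('s,'a) episode) \<Rightarrow> nat \<Rightarrow> nat \<Rightarrow> 's" where
  "st ep t h = fst (ep t ! (h - 1))"

definition act :: "(nat \<Rightarrow> ('s,'a) episode) \<Rightarrow> nat \<Rightarrow> nat \<Rightarrow> 'a" where
  "act ep t h = snd (ep t ! (h - 1))"

definition phiV :: "('s::finite \<Rightarrow> 'a \<Rightarrow> 's \<Rightarrow> real^'d) \<Rightarrow> 's \<Rightarrow> 'a \<Rightarrow> ('s \<Rightarrow> real) \<Rightarrow> real^'d" where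
  "phiV \<phi> s a V = (\<Sum>s'\<in>UNIV. V s' *\<^sub>R \<phi> s a s')"

definition wnorm :: "real^'d^'d \<Rightarrow> real^'d \<Rightarrow> real" where
  "wnorm M x = sqrt (x \<bullet> (M *v x))"

definition outer :: "real^'d \<Rightarrow> real^'d^'d" where
  "outer x = (\<chi> i j. x $ i * x $ j)"

definition Vset :: "nat \<Rightarrow> ('s \<Rightarrow> real) set" where
  "Vset H = {V. \<forall>x. 0 \<le> V x \<and> V x \<le> real H}"

text \<open>Algorithm 1. The tie-breaking rules are parameters:
 sel k h M s a is the chosen maximiser tilde V_{k,h+1,s,a} given Lambda_{k,h} = M,
 pick k h s f is the chosen maximising action of f = Q_{k,h}(s,.).
 LamA ep n h = Lambda_{n+1,h}.\<close>

primrec LamA ::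
  "('s::finite \<Rightarrow> 'a \<Rightarrow> 's \<Rightarrow> real^'d) \<Rightarrow> real
   \<Rightarrow> (nat \<Rightarrow> nat \<Rightarrow> real^'d^'d \<Rightarrow> 's \<Rightarrow> 'a \<Rightarrow> ('s \<Rightarrow> real))
   \<Rightarrow> (nat \<Rightarrow> ('s,'a) episode) \<Rightarrow> nat \<Rightarrow> nat \<Rightarrow> real^'d^'d" where
  "LamA \<phi> lam sel ep 0 h = lam *\<^sub>R mat 1"
| "LamA \<phi> lam sel ep (Suc n) h =
     LamA \<phi> lam sel ep n h
     + outer (phiV \<phi> (st ep (Suc n) h) (act ep (Suc n) h)
                (sel (Suc n) h (LamA \<phi> lam sel ep n h) (st ep (Suc n) h) (act ep (Suc n) h)))"

definition Lam where
  "Lam \<phi> lam sel ep k h = LamA \<phi> lam sel ep (k - 1) h"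

definition tV where
  "tV \<phi> lam sel ep k h s a = sel k h (Lam \<phi> lam sel ep k h) s a"

definition phik where
  "phik \<phi> lam sel ep k h s a = phiV \<phi> s a (tV \<phi> lam sel ep k h s a)"

definition thetahat where
  "thetahat \<phi> lam sel ep k h =
     matrix_inv (Lam \<phi> lam sel ep k h) *v
       (\<Sum>t\<in>{1..<k}. tV \<phi> lam sel ep t h (st ep t h) (act ep t h) (st ep t (Suc h))
                        *\<^sub>R phik \<phi> lam sel ep t h (st ep t h) (act ep t h))"

definition bonus where
  "bonus \<phi> lam beta sel ep k h s a =
     beta * wnorm (matrix_inv (Lam \<phi> lam sel ep k h)) (phik \<phi> lam sel ep k h s a)"

definition Rk where
  "Rk \<phi> lam beta sel ep k = (\<lambda>h s a. bonus \<phi> lam beta sel ep k h s a)"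

text \<open>VA n h s = V_{k,h}(s) where n = H+1-h steps remain (V_{k,H+1} = 0).\<close>
primrec VA ::
  "('s::finite \<Rightarrow> 'a::finite \<Rightarrow> 's \<Rightarrow> real^'d) \<Rightarrow> nat \<Rightarrow> real \<Rightarrow> real
   \<Rightarrow> (nat \<Rightarrow> nat \<Rightarrow> real^'d^'d \<Rightarrow> 's \<Rightarrow> 'a \<Rightarrow> ('s \<Rightarrow> real))
   \<Rightarrow> (nat \<Rightarrow> ('s,'a) episode) \<Rightarrow> nat \<Rightarrow> nat \<Rightarrow> nat \<Rightarrow> 's \<Rightarrow> real" where
  "VA \<phi> H lam beta sel ep k 0 h s = 0"
| "VA \<phi> H lam beta sel ep k (Suc n) h s =
     Max (range (\<lambda>a. min (thetahat \<phi> lam sel ep k h \<bullet> phiV \<phi> s a (VA \<phi> H lam beta sel ep k n (Suc h))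
                           + Rk \<phi> lam beta sel ep k h s a + bonus \<phi> lam beta sel ep k h s a)
                          (real H)))"

definition Valg where
  "Valg \<phi> H lam beta sel ep k h s = VA \<phi> H lam beta sel ep k (H + 1 - h) h s"

definition Qalg where
  "Qalg \<phi> H lam beta sel ep k h s a =
     min (thetahat \<phi> lam sel ep k h \<bullet> phiV \<phi> s a (Valg \<phi> H lam beta sel ep k (Suc h))
          + Rk \<phi> lam beta sel ep k h s a + bonus \<phi> lam beta sel ep k h s a) (real H)"

definition polk where
  "polk \<phi> H lam beta sel pick ep k h s = pick k h s (\<lambda>a. Qalg \<phi> H lam beta sel ep k h s a)"

primrec roll :: "(nat \<Rightarrow> 's \<Rightarrow> 'a) \<Rightarrow> (nat \<Rightarrow> 's \<Rightarrow> 'a \<Rightarrow> 's pmf) \<Rightarrow> nat \<Rightarrow> nat \<Rightarrow> 's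
                  \<Rightarrow> ('s,'a) episode pmf" where
  "roll pol P h 0 s = return_pmf [(s, pol h s)]"
| "roll pol P h (Suc n) s =
     bind_pmf (P h s (pol h s)) (\<lambda>s'.
     bind_pmf (roll pol P (Suc h) n s') (\<lambda>rest. return_pmf ((s, pol h s) # rest)))"

definition hist_fn :: "('s,'a) episode list \<Rightarrow> nat \<Rightarrow> ('s,'a) episode" where
  "hist_fn hs t = hs ! (t - 1)"

primrec histp ::
  "('s::finite \<Rightarrow> 'a::finite \<Rightarrow> 's \<Rightarrow> real^'d) \<Rightarrow> (nat \<Rightarrow> 's \<Rightarrow> 'a \<Rightarrow> 's pmf) \<Rightarrow> 's \<Rightarrow> nat
   \<Rightarrow> real \<Rightarrow> real
   \<Rightarrow> (nat \<Rightarrow> nat \<Rightarrow> real^'d^'d \<Rightarrow> 's \<Rightarrow> 'a \<Rightarrow> ('s \<Rightarrow> real))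
   \<Rightarrow> (nat \<Rightarrow> nat \<Rightarrow> 's \<Rightarrow> ('a \<Rightarrow> real) \<Rightarrow> 'a)
   \<Rightarrow> nat \<Rightarrow> ('s,'a) episode list pmf" where
  "histp \<phi> P s1 H lam beta sel pick 0 = return_pmf []"
| "histp \<phi> P s1 H lam beta sel pick (Suc n) =
     bind_pmf (histp \<phi> P s1 H lam beta sel pick n) (\<lambda>hs.
     bind_pmf (roll (polk \<phi> H lam beta sel pick (hist_fn hs) (Suc n)) P 1 H s1) (\<lambda>e.
     return_pmf (hs @ [e])))"

text \<open>tilde V^*_h(s,R) with truncation at H; VsA n h s with n = H+1-h remaining steps.\<close>
primrec VsA :: "(nat \<Rightarrow> 's::finite \<Rightarrow> 'a::finite \<Rightarrow> 's pmf) \<Rightarrow> nat \<Rightarrow> (nat \<Rightarrow> 's \<Rightarrow> 'a \<Rightarrow> real)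
                 \<Rightarrow> nat \<Rightarrow> nat \<Rightarrow> 's \<Rightarrow> real" where
  "VsA P H R 0 h s = 0"
| "VsA P H R (Suc n) h s =
     Max (range (\<lambda>a. min (R h s a + (\<Sum>s'\<in>UNIV. pmf (P h s a) s' * VsA P H R n (Suc h) s'))
                          (real H)))"

definition Vstar :: "(nat \<Rightarrow> 's::finite \<Rightarrow> 'a::finite \<Rightarrow> 's pmf) \<Rightarrow> nat \<Rightarrow> (nat \<Rightarrow> 's \<Rightarrow> 'a \<Rightarrow> real)
                 \<Rightarrow> nat \<Rightarrow> 's \<Rightarrow> real" where
  "Vstar P H R h s = VsA P H R (H + 1 - h) h s"

end

theory Submission
  imports Defs
begin

text \<open>
  Optimism follows by backward induction on h as soon as the estimation error
  |(thetahat_{k,h} - \<theta>_h) \<bullet> \<Sum>_{s'} \<phi>(s,a,s') V(s')| is at most the bonus u_{k,h}(s,a) for every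
  V in \<V>: the reward R_{k,h} = u_{k,h} enters Q_{k,h} twice, once as reward and once as
  allowance for this error.

  Let \<eta>_t be the noise of the regression target of episode t and S = \<Sum>_t \<eta>_t \<phi>_t. The ridge
  estimate satisfies thetahat - \<theta> = \<Lambda>\<inverse>S - \<lambda>\<Lambda>\<inverse>\<theta>, so the error is at most
  (\<parallel>S\<parallel> + \<lambda>\<parallel>\<theta>\<parallel>) \<parallel>\<phi>\<parallel> in the norm of \<Lambda>\<inverse>. Here \<lambda>\<parallel>\<theta>\<parallel> \<le> \<surd>\<lambda> B = 1, and since V~ maximises
  \<parallel>\<phi>\<parallel>, the last factor is at most the one in the bonus.

  For fixed x, exp (\<Sum>_t (x \<bullet> \<phi>_t) \<eta>_t - H^2/8 (x \<bullet> \<phi>_t)^2) is a supermartingale by Hoeffding's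
  lemma, as \<eta>_t is centred with range H given the past. Markov's inequality and a union bound
  over h, k and a finite grid of x give an event of probability at least 1 - \<delta> on which all
  these exponents are below c. The exponent dominates a concave quadratic in x whose maximum
  2\<parallel>S\<parallel>^2/H^2 is attained at x = 4/H^2 \<Lambda>\<inverse>S; evaluating at the nearest grid point yields
  \<parallel>S\<parallel>^2 \<le> H^2/2 (c + d/2) \<le> (\<beta> - 1)^2.
\<close>


section \<open>Exponential moments\<close>

definition hoeffding_exponent :: "real \<Rightarrow> real \<Rightarrow> real \<Rightarrow> real" where
  "hoeffding_exponent r l z = l * z - r\<^sup>2 / 8 * l\<^sup>2"

lemma nn_integral_exp_centered_le:
  fixes p :: "'a pmf"
  assumes V: "\<And>x. 0 \<le> V x \<and> V x \<le> r"
  shows "(\<integral>\<^sup>+x. ennreal (exp (l * (V x - measure_pmf.expectation p V))) \<partial>p) \<le> exp (l\<^sup>2 * r\<^sup>2 / 8)"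
proof -
  interpret V: interval_bounded_random_variable p V 0 r
    by unfold_locales (auto simp: V)
  interpret W: interval_bounded_random_variable p "\<lambda>x. r - V x" 0 r
    by unfold_locales (auto simp: V)
  show ?thesis
  proof (cases l "0::real" rule: linorder_cases)
    case less
    have E: "measure_pmf.expectation p (\<lambda>x. r - V x) = r - measure_pmf.expectation p V"
      using V.integrable by (simp add: Bochner_Integration.integral_diff measure_pmf.prob_space)
    have "\<And>x. - l * (r - V x - measure_pmf.expectation p (\<lambda>x. r - V x))
                   = l * (V x - measure_pmf.expectation p V)"
      unfolding E by (simp add: algebra_simps)
    with W.Hoeffdings_lemma_nn_integral[of "- l"] less show ?thesis
      by simp
  next
    case equal
    then show ?thesis by (simp add: measure_pmf.emeasure_space_1)
  next
    case greater
    with V.Hoeffdings_lemma_nn_integral[of l] show ?thesis by simp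
  qed
qed

lemma nn_integral_exp_hoeffding_exponent_le_1:
  fixes p :: "'a pmf"
  assumes "\<And>x. 0 \<le> V x \<and> V x \<le> r"
  shows "(\<integral>\<^sup>+x. ennreal (exp (hoeffding_exponent r l (V x - measure_pmf.expectation p V))) \<partial>p) \<le> 1"
proof -
  let ?m = "measure_pmf.expectation p V"
  have "ennreal (exp (hoeffding_exponent r l z))
        = ennreal (exp (l * z)) * ennreal (exp (- (l\<^sup>2 * r\<^sup>2 / 8)))" for z
    by (simp add: hoeffding_exponent_def mult_exp_exp algebra_simps flip: ennreal_mult)
  then have "(\<integral>\<^sup>+x. ennreal (exp (hoeffding_exponent r l (V x - ?m))) \<partial>p)
        = (\<integral>\<^sup>+x. ennreal (exp (l * (V x - ?m))) \<partial>p) * ennreal (exp (- (l\<^sup>2 * r\<^sup>2 / 8)))"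
    by (simp add: nn_integral_multc)
  also have "\<dots> \<le> ennreal (exp (l\<^sup>2 * r\<^sup>2 / 8)) * ennreal (exp (- (l\<^sup>2 * r\<^sup>2 / 8)))"
    using nn_integral_exp_centered_le[OF assms] by (intro mult_right_mono) auto
  also have "\<dots> = 1"
    by (simp flip: ennreal_mult add: exp_minus)
  finally show ?thesis .
qed

lemma prob_ge_le_exp_neg:
  fixes p :: "'a pmf"
  assumes "(\<integral>\<^sup>+x. ennreal (exp (Z x)) \<partial>p) \<le> 1"
  shows "measure_pmf.prob p {x. c \<le> Z x} \<le> exp (- c)"
proof -
  have "indicator {x. c \<le> Z x} x \<le> ennreal (exp (- c)) * ennreal (exp (Z x))" for x
  proof (cases "c \<le> Z x")
    case True
    then have "1 \<le> exp (Z x - c)" by simp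
    then show ?thesis using True by (simp add: mult_exp_exp ennreal_ge_1 flip: ennreal_mult)
  qed simp
  then have "emeasure p {x. c \<le> Z x} \<le> (\<integral>\<^sup>+x. ennreal (exp (- c)) * ennreal (exp (Z x)) \<partial>p)"
    by (simp add: nn_integral_mono flip: nn_integral_indicator)
  also have "\<dots> = ennreal (exp (- c)) * (\<integral>\<^sup>+x. ennreal (exp (Z x)) \<partial>p)"
    by (rule nn_integral_cmult) simp
  also have "\<dots> \<le> ennreal (exp (- c))"
    using mult_left_mono[OF assms, of "ennreal (exp (- c))"] by simp
  finally show ?thesis
    by (simp add: measure_pmf.emeasure_eq_measure)
qed

lemma prob_Ball_ge_union_bound:
  fixes p :: "'a pmf"
  assumes "finite I" and "\<And>i. i \<in> I \<Longrightarrow> measure_pmf.prob p {x. \<not> Q i x} \<le> r"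
  shows "1 - real (card I) * r \<le> measure_pmf.prob p {x. \<forall>i\<in>I. Q i x}"
proof -
  have "measure_pmf.prob p (\<Union>i\<in>I. {x. \<not> Q i x}) \<le> (\<Sum>i\<in>I. measure_pmf.prob p {x. \<not> Q i x})"
    by (rule measure_pmf.finite_measure_subadditive_finite) (use assms in auto)
  also have "\<dots> \<le> real (card I) * r"
    using sum_mono[of I _ "\<lambda>_. r"] assms(2) by simp
  finally have "measure_pmf.prob p (\<Union>i\<in>I. {x. \<not> Q i x}) \<le> real (card I) * r" .
  moreover have "{x. \<forall>i\<in>I. Q i x} = space p - (\<Union>i\<in>I. {x. \<not> Q i x})"
    by auto
  ultimately show ?thesis
    using measure_pmf.prob_compl[of "\<Union>i\<in>I. {x. \<not> Q i x}" p] by simp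
qed


section \<open>Grids\<close>

definition grid :: "real \<Rightarrow> int \<Rightarrow> (real^'d::finite) set" where
  "grid eps J = (\<lambda>j. \<chi> i. eps * real_of_int (j i)) ` (PiE UNIV (\<lambda>_. {-J..J}))"

lemma finite_grid: "finite (grid eps J)"
  unfolding grid_def by (intro finite_imageI finite_PiE) auto

lemma card_grid_le: "card (grid eps J :: (real^'d::finite) set) \<le> nat (2 * J + 1) ^ CARD('d)"
proof -
  have "card (grid eps J :: (real^'d) set) \<le> card (PiE (UNIV::'d set) (\<lambda>_. {-J..J}))"
    unfolding grid_def by (rule card_image_le) (intro finite_PiE, auto)
  also have "\<dots> = nat (2 * J + 1) ^ CARD('d)"
    by (simp add: card_PiE)
  finally show ?thesis .
qed

lemma grid_point_near:
  fixes x :: "real^'d::finite"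
  assumes eps: "0 < eps" and x: "norm x \<le> real_of_int J * eps"
  obtains g where "g \<in> grid eps J" and "(norm (x - g))\<^sup>2 \<le> real CARD('d) * (eps / 2)\<^sup>2"
proof
  define j where "j i = round (x $ i / eps)" for i
  show "(\<chi> i. eps * real_of_int (j i)) \<in> grid eps J"
  proof -
    have "j i \<in> {-J..J}" for i
    proof -
      have "- real_of_int J \<le> x $ i / eps \<and> x $ i / eps \<le> real_of_int J"
        using component_le_norm_cart[of x i] x eps
        by (auto simp: abs_le_iff pos_divide_le_eq pos_le_divide_eq)
      then have "real_of_int (j i) < real_of_int (J + 1)" "real_of_int (- J - 1) < real_of_int (j i)"
        using of_int_round_le[of "x $ i / eps"] of_int_round_ge[of "x $ i / eps"]
        unfolding j_def by linarith+
      then show ?thesis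
        unfolding of_int_less_iff by simp
    qed
    then show ?thesis
      unfolding grid_def by (intro imageI) (auto simp: PiE_def extensional_def)
  qed
  have "\<bar>x $ i - eps * real_of_int (j i)\<bar> \<le> eps / 2" for i
  proof -
    have "\<bar>eps * (real_of_int (j i) - x $ i / eps)\<bar> \<le> eps * (1 / 2)"
      using of_int_round_abs_le[of "x $ i / eps"] eps by (simp add: abs_mult j_def)
    then show ?thesis
      using eps by (simp add: right_diff_distrib abs_minus_commute)
  qed
  then have "(x $ i - eps * real_of_int (j i))\<^sup>2 \<le> (eps / 2)\<^sup>2" for i
    by (metis abs_ge_zero power2_abs power_mono)
  moreover have "(norm (x - (\<chi> i. eps * real_of_int (j i))))\<^sup>2
                  = (\<Sum>i\<in>UNIV. (x $ i - eps * real_of_int (j i))\<^sup>2)"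
    by (simp only: power2_norm_eq_inner inner_vec_def) (simp add: power2_eq_square)
  ultimately show "(norm (x - (\<chi> i. eps * real_of_int (j i))))\<^sup>2 \<le> real CARD('d) * (eps / 2)\<^sup>2"
    using sum_mono[of UNIV "\<lambda>i. (x $ i - eps * real_of_int (j i))\<^sup>2" "\<lambda>_. (eps / 2)\<^sup>2"]
    by simp
qed


section \<open>Regularised Gram matrices\<close>

lemma outer_mult_vec: "outer u *v y = (u \<bullet> y) *\<^sub>R (u::real^'d)"
  by (simp add: outer_def matrix_vector_mult_def vec_eq_iff inner_vec_def sum_distrib_left
      mult.commute mult.left_commute)

locale ridge_gram =
  fixes L :: "real^'d::finite^'d" and lam :: real and f :: "nat \<Rightarrow> real^'d" and T :: "nat set"
  assumes finite_T: "finite T" and lam_pos: "0 < lam"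
    and L_mult_vec: "\<And>y. L *v y = lam *\<^sub>R y + (\<Sum>t\<in>T. (f t \<bullet> y) *\<^sub>R f t)"
begin

definition G :: "real^'d \<Rightarrow> real^'d \<Rightarrow> real" where
  "G x y = lam * (x \<bullet> y) + (\<Sum>t\<in>T. (f t \<bullet> x) * (f t \<bullet> y))"

lemma inner_L_mult_vec: "x \<bullet> (L *v y) = G x y"
  by (simp add: L_mult_vec G_def inner_add_right inner_sum_right mult.commute inner_commute)

lemma G_commute: "G x y = G y x"
  by (simp add: G_def inner_commute mult.commute)

lemma G_diff_left: "G (a - b) y = G a y - G b y"
  by (simp add: G_def inner_diff_right algebra_simps sum_subtractf)

lemma G_add_left: "G (a + b) y = G a y + G b y"
  by (simp add: G_def inner_add_right algebra_simps sum.distrib)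

lemma G_scaleR_left: "G (c *\<^sub>R a) y = c * G a y"
  by (simp add: G_def algebra_simps sum_distrib_left)

lemma G_diff_right: "G y (a - b) = G y a - G y b"
  by (metis G_commute G_diff_left)

lemma G_add_right: "G y (a + b) = G y a + G y b"
  by (metis G_commute G_add_left)

lemma G_scaleR_right: "G y (c *\<^sub>R a) = c * G y a"
  by (metis G_commute G_scaleR_left)

lemma lam_norm_le_G: "lam * (norm x)\<^sup>2 \<le> G x x"
  by (auto simp: G_def power2_norm_eq_inner intro!: sum_nonneg)

lemma G_self_nonneg: "0 \<le> G x x"
  using lam_norm_le_G[of x] lam_pos by (meson order_trans zero_le_mult_iff zero_le_power2 less_imp_le)

lemma G_self_pos: "x \<noteq> 0 \<Longrightarrow> 0 < G x x"
  using lam_norm_le_G[of x] lam_pos by (smt (verit) mult_pos_pos zero_less_norm_iff zero_less_power)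

lemma abs_G_le: "\<bar>G a b\<bar> \<le> sqrt (G a a) * sqrt (G b b)"
proof (cases "b = 0")
  case True
  then show ?thesis by (simp add: G_def)
next
  case False
  then have pos: "0 < G b b" by (rule G_self_pos)
  have "0 \<le> G (G b b *\<^sub>R a - G a b *\<^sub>R b) (G b b *\<^sub>R a - G a b *\<^sub>R b)"
    by (rule G_self_nonneg)
  also have "\<dots> = G b b * (G a a * G b b - (G a b)\<^sup>2)"
    by (simp add: G_diff_left G_diff_right G_scaleR_left G_scaleR_right G_commute[of b a]
        power2_eq_square algebra_simps)
  finally have "(G a b)\<^sup>2 \<le> G a a * G b b"
    using pos by (simp add: zero_le_mult_iff)
  then show ?thesis
    by (metis real_sqrt_abs real_sqrt_le_mono real_sqrt_mult)
qed

lemma matrix_inv_L: "L ** matrix_inv L = mat 1" "matrix_inv L ** L = mat 1"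
proof -
  have "x = 0" if "L *v x = 0" for x
    using that G_self_pos[of x] inner_L_mult_vec[of x x] by force
  then have "invertible L"
    using matrix_left_invertible_ker invertible_left_inverse by blast
  then show "L ** matrix_inv L = mat 1" "matrix_inv L ** L = mat 1"
    using someI_ex[of "\<lambda>A'. L ** A' = mat 1 \<and> A' ** L = mat 1"]
    by (auto simp: invertible_def matrix_inv_def)
qed

lemma inner_matrix_inv_eq_G:
  "(matrix_inv L *v w) \<bullet> v = G (matrix_inv L *v w) (matrix_inv L *v v)"
  by (metis inner_L_mult_vec matrix_inv_L(1) matrix_vector_mul_assoc matrix_vector_mul_lid)

lemma wnorm_matrix_inv_eq:
  "wnorm (matrix_inv L) w = sqrt (G (matrix_inv L *v w) (matrix_inv L *v w))"
  by (simp add: wnorm_def inner_commute[of w] inner_matrix_inv_eq_G)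

lemma wnorm_matrix_inv_nonneg: "0 \<le> wnorm (matrix_inv L) w"
  by (simp add: wnorm_matrix_inv_eq G_self_nonneg)

lemma abs_inner_matrix_inv_le:
  "\<bar>(matrix_inv L *v w) \<bullet> v\<bar> \<le> wnorm (matrix_inv L) w * wnorm (matrix_inv L) v"
  unfolding inner_matrix_inv_eq_G wnorm_matrix_inv_eq by (rule abs_G_le)

lemma lam_norm_matrix_inv_le: "lam * (norm (matrix_inv L *v w))\<^sup>2 \<le> (wnorm (matrix_inv L) w)\<^sup>2"
  by (simp add: wnorm_matrix_inv_eq G_self_nonneg lam_norm_le_G)

lemma lam_wnorm_matrix_inv_le: "lam * wnorm (matrix_inv L) w \<le> sqrt lam * norm w"
proof -
  define a where "a = matrix_inv L *v w"
  have sq: "(wnorm (matrix_inv L) w)\<^sup>2 = a \<bullet> w"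
    by (simp add: a_def wnorm_matrix_inv_eq G_self_nonneg inner_matrix_inv_eq_G)
  have "lam * (norm a)\<^sup>2 \<le> norm a * norm w"
    using lam_norm_matrix_inv_le[of w] sq norm_cauchy_schwarz[of a w] by (simp add: a_def)
  then have "lam * norm a \<le> norm w"
    by (cases "a = 0") (auto simp: power2_eq_square)
  then have "lam * (norm a * norm w) \<le> (norm w)\<^sup>2"
    using mult_right_mono[of "lam * norm a" "norm w" "norm w"] by (simp add: power2_eq_square)
  moreover have "(wnorm (matrix_inv L) w)\<^sup>2 \<le> norm a * norm w"
    using sq norm_cauchy_schwarz[of a w] by simp
  ultimately have "lam * (wnorm (matrix_inv L) w)\<^sup>2 \<le> (norm w)\<^sup>2"
    using lam_pos by (meson mult_left_mono order_trans less_imp_le)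
  then have "lam * (lam * (wnorm (matrix_inv L) w)\<^sup>2) \<le> lam * (norm w)\<^sup>2"
    using lam_pos by simp
  then have "(lam * wnorm (matrix_inv L) w)\<^sup>2 \<le> (sqrt lam * norm w)\<^sup>2"
    using lam_pos by (simp add: power_mult_distrib power2_eq_square[of lam] mult.assoc)
  then show ?thesis
    by (rule power2_le_imp_le) (simp add: lam_pos less_imp_le)
qed

lemma wnorm_matrix_inv_sum_le:
  "(wnorm (matrix_inv L) (\<Sum>t\<in>T. \<eta> t *\<^sub>R f t))\<^sup>2 \<le> (\<Sum>t\<in>T. (\<eta> t)\<^sup>2)"
proof -
  define a where "a = matrix_inv L *v (\<Sum>t\<in>T. \<eta> t *\<^sub>R f t)"
  define Q where "Q = G a a"
  define E where "E = (\<Sum>t\<in>T. (\<eta> t)\<^sup>2)"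
  have "Q = (\<Sum>t\<in>T. \<eta> t * (f t \<bullet> a))"
    using inner_matrix_inv_eq_G[of "\<Sum>t\<in>T. \<eta> t *\<^sub>R f t" "\<Sum>t\<in>T. \<eta> t *\<^sub>R f t"]
    by (simp add: Q_def a_def inner_sum_left inner_commute)
  then have "Q\<^sup>2 \<le> E * (\<Sum>t\<in>T. (f t \<bullet> a)\<^sup>2)"
    unfolding E_def by (simp add: Cauchy_Schwarz_ineq_sum)
  also have "\<dots> \<le> E * Q"
    using lam_pos by (intro mult_left_mono)
      (auto simp: E_def Q_def G_def power2_eq_square intro!: sum_nonneg)
  finally have "Q\<^sup>2 \<le> E * Q" .
  then have "Q \<le> E"
    using G_self_nonneg[of a] by (cases "Q = 0") (auto simp: Q_def E_def power2_eq_square intro!: sum_nonneg)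
  then show ?thesis
    by (simp add: Q_def a_def E_def wnorm_matrix_inv_eq G_self_nonneg)
qed

lemma G_le_norm:
  assumes "\<And>t. t \<in> T \<Longrightarrow> norm (f t) \<le> r"
  shows "G e e \<le> (lam + real (card T) * r\<^sup>2) * (norm e)\<^sup>2"
proof -
  have "(f t \<bullet> e) * (f t \<bullet> e) \<le> r\<^sup>2 * (norm e)\<^sup>2" if "t \<in> T" for t
  proof -
    have "\<bar>f t \<bullet> e\<bar> \<le> r * norm e"
      using Cauchy_Schwarz_ineq2[of "f t" e] assms[OF that] by (meson mult_right_mono norm_ge_zero order_trans)
    then show ?thesis
      by (metis abs_ge_zero power2_abs power_mono power2_eq_square power_mult_distrib)
  qed
  then have "(\<Sum>t\<in>T. (f t \<bullet> e) * (f t \<bullet> e)) \<le> real (card T) * r\<^sup>2 * (norm e)\<^sup>2"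
    using sum_mono[of T _ "\<lambda>_. r\<^sup>2 * (norm e)\<^sup>2"] by (simp add: mult.assoc)
  then show ?thesis
    by (simp add: G_def power2_norm_eq_inner algebra_simps)
qed

text \<open>The sum is at least \<open>x \<bullet> S - r\<^sup>2/8 * G x x\<close>, a concave quadratic maximised at
  \<open>x = 4/r\<^sup>2 * matrix_inv L *v S\<close>; \<open>e\<close> is the offset from that maximiser.\<close>

lemma sum_hoeffding_exponent_ge:
  assumes r: "0 < r" and x: "x = (4 / r\<^sup>2) *\<^sub>R (matrix_inv L *v (\<Sum>t\<in>T. \<eta> t *\<^sub>R f t)) + e"
  shows "2 * (wnorm (matrix_inv L) (\<Sum>t\<in>T. \<eta> t *\<^sub>R f t))\<^sup>2 / r\<^sup>2 - r\<^sup>2 / 8 * G e e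
         \<le> (\<Sum>t\<in>T. hoeffding_exponent r (x \<bullet> f t) (\<eta> t))"
proof -
  define S where "S = (\<Sum>t\<in>T. \<eta> t *\<^sub>R f t)"
  define a where "a = matrix_inv L *v S"
  have xS: "x \<bullet> S = G x a"
    using inner_matrix_inv_eq_G[of S x] G_commute[of x a]
    by (metis a_def inner_commute inner_L_mult_vec matrix_inv_L(1) matrix_vector_mul_assoc
        matrix_vector_mul_lid)
  have "(\<Sum>t\<in>T. hoeffding_exponent r (x \<bullet> f t) (\<eta> t))
        = x \<bullet> S - r\<^sup>2 / 8 * (\<Sum>t\<in>T. (x \<bullet> f t)\<^sup>2)"
    by (simp add: hoeffding_exponent_def S_def sum_subtractf sum_distrib_left inner_sum_right
        mult.commute)
  also have "\<dots> \<ge> x \<bullet> S - r\<^sup>2 / 8 * G x x"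
    using lam_pos by (auto simp: G_def power2_eq_square inner_commute intro!: mult_left_mono)
  finally have lower: "x \<bullet> S - r\<^sup>2 / 8 * G x x \<le> (\<Sum>t\<in>T. hoeffding_exponent r (x \<bullet> f t) (\<eta> t))" .
  have x': "x = (4 / r\<^sup>2) *\<^sub>R a + e"
    using x by (simp add: a_def S_def)
  have "G x a = 4 / r\<^sup>2 * G a a + G e a"
    by (simp add: x' G_add_left G_scaleR_left)
  moreover have "G x x = (4 / r\<^sup>2)\<^sup>2 * G a a + 2 * (4 / r\<^sup>2) * G e a + G e e"
    by (simp add: x' G_add_left G_add_right G_scaleR_left G_scaleR_right G_commute[of a e]
        power2_eq_square algebra_simps)
  ultimately have "x \<bullet> S - r\<^sup>2 / 8 * G x x = 2 * G a a / r\<^sup>2 - r\<^sup>2 / 8 * G e e"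
    using r by (simp add: xS field_simps power2_eq_square)
  with lower show ?thesis
    by (simp add: S_def a_def wnorm_matrix_inv_eq G_self_nonneg)
qed

lemma abs_ridge_error_le:
  "\<bar>(matrix_inv L *v (\<Sum>t\<in>T. (f t \<bullet> \<theta> + \<eta> t) *\<^sub>R f t) - \<theta>) \<bullet> v\<bar>
   \<le> (wnorm (matrix_inv L) (\<Sum>t\<in>T. \<eta> t *\<^sub>R f t) + lam * wnorm (matrix_inv L) \<theta>)
       * wnorm (matrix_inv L) v"
proof -
  define S where "S = (\<Sum>t\<in>T. \<eta> t *\<^sub>R f t)"
  have "(\<Sum>t\<in>T. (f t \<bullet> \<theta> + \<eta> t) *\<^sub>R f t) = L *v \<theta> - lam *\<^sub>R \<theta> + S"
    by (simp add: L_mult_vec S_def scaleR_add_left sum.distrib)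
  then have "matrix_inv L *v (\<Sum>t\<in>T. (f t \<bullet> \<theta> + \<eta> t) *\<^sub>R f t) - \<theta>
             = matrix_inv L *v S - lam *\<^sub>R (matrix_inv L *v \<theta>)"
    by (simp add: matrix_vector_right_distrib matrix_vector_mult_diff_distrib
        matrix_vector_mult_scaleR matrix_vector_mul_assoc matrix_inv_L(2))
  then have "\<bar>(matrix_inv L *v (\<Sum>t\<in>T. (f t \<bullet> \<theta> + \<eta> t) *\<^sub>R f t) - \<theta>) \<bullet> v\<bar>
             \<le> \<bar>(matrix_inv L *v S) \<bullet> v\<bar> + lam * \<bar>(matrix_inv L *v \<theta>) \<bullet> v\<bar>"
    using abs_triangle_ineq4[of "(matrix_inv L *v S) \<bullet> v" "lam * ((matrix_inv L *v \<theta>) \<bullet> v)"] lam_pos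
    by (simp add: inner_diff_left abs_mult)
  also have "\<dots> \<le> wnorm (matrix_inv L) S * wnorm (matrix_inv L) v
                  + lam * (wnorm (matrix_inv L) \<theta> * wnorm (matrix_inv L) v)"
    using lam_pos by (intro add_mono mult_left_mono abs_inner_matrix_inv_le) auto
  finally show ?thesis
    by (simp add: S_def algebra_simps)
qed

lemma norm_matrix_inv_sum_le:
  assumes r: "0 \<le> r" and eta: "\<And>t. t \<in> T \<Longrightarrow> \<bar>\<eta> t\<bar> \<le> r" and card: "card T \<le> K"
  shows "norm (matrix_inv L *v (\<Sum>t\<in>T. \<eta> t *\<^sub>R f t)) \<le> r * sqrt (real K / lam)"
proof -
  have "(wnorm (matrix_inv L) (\<Sum>t\<in>T. \<eta> t *\<^sub>R f t))\<^sup>2 \<le> (\<Sum>t\<in>T. r\<^sup>2)"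
    using wnorm_matrix_inv_sum_le
    by (rule order_trans) (intro sum_mono, metis abs_ge_zero eta power2_abs power_mono)
  also have "\<dots> \<le> real K * r\<^sup>2"
    using card by (simp add: mult_right_mono)
  finally have "(norm (matrix_inv L *v (\<Sum>t\<in>T. \<eta> t *\<^sub>R f t)))\<^sup>2 \<le> (r * sqrt (real K / lam))\<^sup>2"
    using lam_norm_matrix_inv_le[of "\<Sum>t\<in>T. \<eta> t *\<^sub>R f t"] lam_pos
    by (simp add: power_mult_distrib field_simps)
  then show ?thesis
    by (rule power2_le_imp_le) (use r lam_pos in simp)
qed

text \<open>A union bound controls the Hoeffding exponents only at grid points; the exponent at the
  optimal \<open>x\<close> is recovered from the nearest grid point, at a cost of \<open>CARD('d)/2\<close> fixed by
  the spacing \<open>eps\<close>.\<close>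

lemma wnorm_sum_sq_lt_of_grid:
  assumes r: "0 < r"
    and eta: "\<And>t. t \<in> T \<Longrightarrow> \<bar>\<eta> t\<bar> \<le> r" and f: "\<And>t. t \<in> T \<Longrightarrow> norm (f t) \<le> r"
    and card: "card T \<le> K"
    and eps: "0 < eps" and radius: "4 * sqrt (real K / lam) / r \<le> real_of_int J * eps"
    and spacing: "r\<^sup>2 / 8 * (lam + real K * r\<^sup>2) * (eps / 2)\<^sup>2 \<le> 1 / 2"
    and below: "\<forall>x\<in>grid eps J. (\<Sum>t\<in>T. hoeffding_exponent r (x \<bullet> f t) (\<eta> t)) < c"
  shows "(wnorm (matrix_inv L) (\<Sum>t\<in>T. \<eta> t *\<^sub>R f t))\<^sup>2 < r\<^sup>2 / 2 * (c + real CARD('d) / 2)"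
proof -
  define S where "S = (\<Sum>t\<in>T. \<eta> t *\<^sub>R f t)"
  define x where "x = (4 / r\<^sup>2) *\<^sub>R (matrix_inv L *v S)"
  have "norm (matrix_inv L *v S) \<le> r * sqrt (real K / lam)"
    unfolding S_def using r eta card by (intro norm_matrix_inv_sum_le) auto
  then have "norm x \<le> 4 / r\<^sup>2 * (r * sqrt (real K / lam))"
    using mult_left_mono[of _ _ "4 / r\<^sup>2"] by (simp add: x_def)
  also have "\<dots> = 4 * sqrt (real K / lam) / r"
    using r by (simp add: power2_eq_square)
  finally have "norm x \<le> real_of_int J * eps"
    using radius by linarith
  then obtain g where g: "g \<in> grid eps J" and near: "(norm (x - g))\<^sup>2 \<le> real CARD('d) * (eps / 2)\<^sup>2"
    using grid_point_near eps by blast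
  have "G (g - x) (g - x) \<le> (lam + real (card T) * r\<^sup>2) * (norm (g - x))\<^sup>2"
    using G_le_norm f by blast
  also have "\<dots> \<le> (lam + real K * r\<^sup>2) * (real CARD('d) * (eps / 2)\<^sup>2)"
    using card lam_pos near by (intro mult_mono add_left_mono mult_right_mono)
      (auto simp: norm_minus_commute)
  finally have "r\<^sup>2 / 8 * G (g - x) (g - x)
                \<le> r\<^sup>2 / 8 * ((lam + real K * r\<^sup>2) * (real CARD('d) * (eps / 2)\<^sup>2))"
    by (simp add: mult_left_mono)
  also have "\<dots> = real CARD('d) * (r\<^sup>2 / 8 * (lam + real K * r\<^sup>2) * (eps / 2)\<^sup>2)"
    by (simp add: algebra_simps)
  also have "\<dots> \<le> real CARD('d) / 2"
    using mult_left_mono[OF spacing, of "real CARD('d)"] by simp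
  finally have "r\<^sup>2 / 8 * G (g - x) (g - x) \<le> real CARD('d) / 2" .
  moreover have "2 * (wnorm (matrix_inv L) S)\<^sup>2 / r\<^sup>2 - r\<^sup>2 / 8 * G (g - x) (g - x)
                 \<le> (\<Sum>t\<in>T. hoeffding_exponent r (g \<bullet> f t) (\<eta> t))"
    unfolding S_def by (rule sum_hoeffding_exponent_ge[OF r]) (simp add: S_def x_def)
  moreover have "(\<Sum>t\<in>T. hoeffding_exponent r (g \<bullet> f t) (\<eta> t)) < c"
    using below g by blast
  ultimately have "2 * (wnorm (matrix_inv L) S)\<^sup>2 / r\<^sup>2 < c + real CARD('d) / 2"
    by linarith
  then show ?thesis
    using r by (simp add: S_def pos_divide_less_eq algebra_simps)
qed

end


section \<open>Roll-outs and histories\<close>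

lemma roll_hd: "e \<in> set_pmf (roll pol P j n s) \<Longrightarrow> e \<noteq> [] \<and> e ! 0 = (s, pol j s)"
  by (induction n arbitrary: j s) auto

lemma nn_integral_roll_transition_le_1:
  fixes P :: "nat \<Rightarrow> 's \<Rightarrow> 'a \<Rightarrow> 's pmf"
  assumes "i < n" and "\<And>s a. (\<integral>\<^sup>+s'. F (s, a) s' \<partial>P (j + i) s a) \<le> 1"
  shows "(\<integral>\<^sup>+e. F (e ! i) (fst (e ! Suc i)) \<partial>roll pol P j n s) \<le> 1"
  using assms
proof (induction n arbitrary: j i s)
  case 0
  then show ?case by simp
next
  case (Suc n)
  show ?case
  proof (cases i)
    case 0
    have "(\<integral>\<^sup>+rest. F (s, pol j s) (fst (rest ! 0)) \<partial>roll pol P (Suc j) n s') = F (s, pol j s) s'"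
      for s'
      by (subst nn_integral_cong_AE[where v = "\<lambda>_. F (s, pol j s) s'"])
        (auto simp: AE_measure_pmf_iff measure_pmf.emeasure_space_1 dest: roll_hd)
    then show ?thesis
      using Suc.prems(2)[of s "pol j s"] by (simp add: 0)
  next
    case (Suc i')
    have "(\<integral>\<^sup>+rest. F (rest ! i') (fst (rest ! Suc i')) \<partial>roll pol P (Suc j) n s') \<le> 1" for s'
      using Suc.prems Suc.IH[of i' "Suc j" s'] by (simp add: \<open>i = Suc i'\<close>)
    then have "(\<integral>\<^sup>+s'. \<integral>\<^sup>+rest. F (rest ! i') (fst (rest ! Suc i')) \<partial>roll pol P (Suc j) n s'
                  \<partial>P j s (pol j s)) \<le> (\<integral>\<^sup>+s'. 1 \<partial>P j s (pol j s))"
      by (intro nn_integral_mono) simp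
    then show ?thesis
      by (simp add: Suc measure_pmf.emeasure_space_1)
  qed
qed

lemma length_histp: "hs \<in> set_pmf (histp \<phi> P s1 H lam beta sel pick n) \<Longrightarrow> length hs = n"
  by (induction n arbitrary: hs) auto

lemma hist_fn_append: "length hs = n \<Longrightarrow> t \<in> {1..n} \<Longrightarrow> hist_fn (hs @ [e]) t = hist_fn hs t"
  unfolding hist_fn_def by (subst nth_append) auto

lemma hist_fn_append_last: "length hs = n \<Longrightarrow> hist_fn (hs @ [e]) (Suc n) = e"
  unfolding hist_fn_def by (simp add: nth_append)


section \<open>Concentration\<close>

text \<open>In the notation of the paper, \<open>feat \<phi> lam sel ep h t\<close> is \<phi>_{t,h}(s_{t,h}, a_{t,h}) and
  \<open>target \<phi> lam sel ep h t\<close> is V~_{t,h+1,s_{t,h},a_{t,h}}(s_{t,h+1}); given the past, the target has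
  conditional mean \<open>\<theta> h \<bullet> feat \<phi> lam sel ep h t\<close>.\<close>

definition feat ::
  "('s::finite \<Rightarrow> 'a \<Rightarrow> 's \<Rightarrow> real^'d::finite) \<Rightarrow> real
   \<Rightarrow> (nat \<Rightarrow> nat \<Rightarrow> real^'d^'d \<Rightarrow> 's \<Rightarrow> 'a \<Rightarrow> ('s \<Rightarrow> real))
   \<Rightarrow> (nat \<Rightarrow> ('s, 'a) episode) \<Rightarrow> nat \<Rightarrow> nat \<Rightarrow> real^'d" where
  "feat \<phi> lam sel ep h t = phik \<phi> lam sel ep t h (st ep t h) (act ep t h)"

definition target ::
  "('s::finite \<Rightarrow> 'a \<Rightarrow> 's \<Rightarrow> real^'d::finite) \<Rightarrow> real
   \<Rightarrow> (nat \<Rightarrow> nat \<Rightarrow> real^'d^'d \<Rightarrow> 's \<Rightarrow> 'a \<Rightarrow> ('s \<Rightarrow> real))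
   \<Rightarrow> (nat \<Rightarrow> ('s, 'a) episode) \<Rightarrow> nat \<Rightarrow> nat \<Rightarrow> real" where
  "target \<phi> lam sel ep h t = tV \<phi> lam sel ep t h (st ep t h) (act ep t h) (st ep t (Suc h))"

definition noise ::
  "('s::finite \<Rightarrow> 'a \<Rightarrow> 's \<Rightarrow> real^'d::finite) \<Rightarrow> real
   \<Rightarrow> (nat \<Rightarrow> nat \<Rightarrow> real^'d^'d \<Rightarrow> 's \<Rightarrow> 'a \<Rightarrow> ('s \<Rightarrow> real)) \<Rightarrow> (nat \<Rightarrow> real^'d)
   \<Rightarrow> (nat \<Rightarrow> ('s, 'a) episode) \<Rightarrow> nat \<Rightarrow> nat \<Rightarrow> real" where
  "noise \<phi> lam sel \<theta> ep h t = target \<phi> lam sel ep h t - \<theta> h \<bullet> feat \<phi> lam sel ep h t"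

definition zsum ::
  "('s::finite \<Rightarrow> 'a \<Rightarrow> 's \<Rightarrow> real^'d::finite) \<Rightarrow> real
   \<Rightarrow> (nat \<Rightarrow> nat \<Rightarrow> real^'d^'d \<Rightarrow> 's \<Rightarrow> 'a \<Rightarrow> ('s \<Rightarrow> real)) \<Rightarrow> (nat \<Rightarrow> real^'d)
   \<Rightarrow> real \<Rightarrow> real^'d \<Rightarrow> (nat \<Rightarrow> ('s, 'a) episode) \<Rightarrow> nat \<Rightarrow> nat \<Rightarrow> real" where
  "zsum \<phi> lam sel \<theta> r x ep h k =
     (\<Sum>t\<in>{1..<k}. hoeffding_exponent r (x \<bullet> feat \<phi> lam sel ep h t) (noise \<phi> lam sel \<theta> ep h t))"

lemma LamA_mult_vec:
  "LamA \<phi> lam sel ep n h *v y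
   = lam *\<^sub>R y + (\<Sum>t\<in>{1..<Suc n}. (feat \<phi> lam sel ep h t \<bullet> y) *\<^sub>R feat \<phi> lam sel ep h t)"
proof (induction n)
  case 0
  then show ?case by (simp flip: scaleR_matrix_vector_assoc)
next
  case (Suc n)
  then show ?case
    by (simp add: matrix_vector_mult_add_rdistrib outer_mult_vec atLeastLessThanSuc add.assoc
        feat_def phik_def tV_def Lam_def)
qed

lemma Lam_mult_vec:
  "Lam \<phi> lam sel ep k h *v y
   = lam *\<^sub>R y + (\<Sum>t\<in>{1..<k}. (feat \<phi> lam sel ep h t \<bullet> y) *\<^sub>R feat \<phi> lam sel ep h t)"
  by (cases k) (simp_all add: Lam_def LamA_mult_vec flip: scaleR_matrix_vector_assoc)

lemma LamA_cong:
  assumes "\<And>t. t \<in> {1..n} \<Longrightarrow> ep t = ep' t" and "m \<le> n"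
  shows "LamA \<phi> lam sel ep m h = LamA \<phi> lam sel ep' m h"
  using assms(2) by (induction m) (simp_all add: assms(1) st_def act_def)

lemma zsum_cong:
  assumes agree: "\<And>t. t \<in> {1..n} \<Longrightarrow> ep t = ep' t" and "k \<le> Suc n"
  shows "zsum \<phi> lam sel \<theta> r x ep h k = zsum \<phi> lam sel \<theta> r x ep' h k"
  unfolding zsum_def
proof (rule sum.cong)
  fix t
  assume "t \<in> {1..<k}"
  then have t: "t \<in> {1..n}"
    using assms(2) by auto
  have "LamA \<phi> lam sel ep (t - 1) h = LamA \<phi> lam sel ep' (t - 1) h"
    by (rule LamA_cong[OF agree]) (use t in auto)
  then show "hoeffding_exponent r (x \<bullet> feat \<phi> lam sel ep h t) (noise \<phi> lam sel \<theta> ep h t)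
    = hoeffding_exponent r (x \<bullet> feat \<phi> lam sel ep' h t) (noise \<phi> lam sel \<theta> ep' h t)"
    using agree[OF t]
    by (simp add: noise_def target_def feat_def phik_def tV_def Lam_def st_def act_def)
qed simp

lemma inner_phiV_eq_sum_pmf:
  assumes "\<forall>s a s'. pmf (Q s a) s' = \<theta> \<bullet> \<phi> s a s'"
  shows "\<theta> \<bullet> phiV \<phi> s a V = (\<Sum>s'\<in>UNIV. pmf (Q s a) s' * V s')"
  unfolding phiV_def using assms by (simp add: inner_sum_right mult.commute)

lemma inner_phiV_eq_expectation:
  assumes "\<forall>s a s'. pmf (Q s a) s' = \<theta> \<bullet> \<phi> s a s'"
  shows "\<theta> \<bullet> phiV \<phi> s a V = measure_pmf.expectation (Q s a) V"
  unfolding inner_phiV_eq_sum_pmf[OF assms]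
  by (subst integral_measure_pmf_real[of UNIV]) (auto simp: mult.commute)

lemma zsum_append_episode:
  fixes \<phi> :: "'s::finite \<Rightarrow> 'a \<Rightarrow> 's \<Rightarrow> real^'d::finite" and lam :: real
    and sel :: "nat \<Rightarrow> nat \<Rightarrow> real^'d^'d \<Rightarrow> 's \<Rightarrow> 'a \<Rightarrow> ('s \<Rightarrow> real)" and e :: "('s, 'a) episode"
  assumes len: "length hs = n" and h: "1 \<le> h"
  defines "V \<equiv> sel (Suc n) h (LamA \<phi> lam sel (hist_fn hs) n h) (fst (e ! (h - 1))) (snd (e ! (h - 1)))"
  defines "v \<equiv> phiV \<phi> (fst (e ! (h - 1))) (snd (e ! (h - 1))) V"
  shows "zsum \<phi> lam sel \<theta> r x (hist_fn (hs @ [e])) h (Suc (Suc n))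
         = zsum \<phi> lam sel \<theta> r x (hist_fn hs) h (Suc n)
           + hoeffding_exponent r (x \<bullet> v) (V (fst (e ! h)) - \<theta> h \<bullet> v)"
proof -
  have agree: "\<And>t. t \<in> {1..n} \<Longrightarrow> hist_fn (hs @ [e]) t = hist_fn hs t"
    using hist_fn_append[OF len] by blast
  have "LamA \<phi> lam sel (hist_fn (hs @ [e])) n h = LamA \<phi> lam sel (hist_fn hs) n h"
    by (rule LamA_cong[of n "hist_fn (hs @ [e])" "hist_fn hs", OF agree]) auto
  then have "zsum \<phi> lam sel \<theta> r x (hist_fn (hs @ [e])) h (Suc (Suc n))
      = zsum \<phi> lam sel \<theta> r x (hist_fn (hs @ [e])) h (Suc n)
        + hoeffding_exponent r (x \<bullet> v) (V (fst (e ! h)) - \<theta> h \<bullet> v)"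
    using h hist_fn_append_last[OF len, of e]
    by (simp add: zsum_def atLeastLessThanSuc noise_def target_def feat_def phik_def tV_def
        Lam_def st_def act_def V_def v_def)
  moreover have "zsum \<phi> lam sel \<theta> r x (hist_fn (hs @ [e])) h (Suc n)
      = zsum \<phi> lam sel \<theta> r x (hist_fn hs) h (Suc n)"
    by (rule zsum_cong[of n "hist_fn (hs @ [e])" "hist_fn hs", OF agree]) auto
  ultimately show ?thesis
    by simp
qed

text \<open>Given the history, the new episode contributes one Hoeffding exponent, whose exponential
  has conditional expectation at most \<open>1\<close>; so \<open>exp \<circ> zsum\<close> is a supermartingale.\<close>

lemma nn_integral_exp_zsum_append_le:
  fixes \<phi> :: "'s::finite \<Rightarrow> 'a::finite \<Rightarrow> 's \<Rightarrow> real^'d::finite"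
    and P :: "nat \<Rightarrow> 's \<Rightarrow> 'a \<Rightarrow> 's pmf"
  assumes mix: "\<forall>s a s'. pmf (P h s a) s' = \<theta> h \<bullet> \<phi> s a s'"
    and selV: "\<forall>k h M s a. sel k h M s a \<in> Vset H"
    and h: "1 \<le> h" "h \<le> H" and len: "length hs = n"
  shows "(\<integral>\<^sup>+e. ennreal (exp (zsum \<phi> lam sel \<theta> (real H) x (hist_fn (hs @ [e])) h (Suc (Suc n))))
            \<partial>roll pol P 1 H s1)
         \<le> ennreal (exp (zsum \<phi> lam sel \<theta> (real H) x (hist_fn hs) h (Suc n)))"
proof -
  define V where "V sa = sel (Suc n) h (LamA \<phi> lam sel (hist_fn hs) n h) (fst sa) (snd sa)"
    for sa :: "'s \<times> 'a"
  define F where "F sa s' = ennreal (exp (hoeffding_exponent (real H)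
      (x \<bullet> phiV \<phi> (fst sa) (snd sa) (V sa)) (V sa s' - \<theta> h \<bullet> phiV \<phi> (fst sa) (snd sa) (V sa))))"
    for sa s'
  have split: "ennreal (exp (zsum \<phi> lam sel \<theta> (real H) x (hist_fn (hs @ [e])) h (Suc (Suc n))))
      = ennreal (exp (zsum \<phi> lam sel \<theta> (real H) x (hist_fn hs) h (Suc n))) * F (e ! (h - 1)) (fst (e ! h))"
    for e
    by (simp add: zsum_append_episode[OF len h(1)] F_def V_def exp_add ennreal_mult)
  have "(\<integral>\<^sup>+s'. F (s, a) s' \<partial>P (1 + (h - 1)) s a) \<le> 1" for s a
  proof -
    have "\<theta> h \<bullet> phiV \<phi> s a (V (s, a)) = measure_pmf.expectation (P h s a) (V (s, a))"
      by (rule inner_phiV_eq_expectation[OF mix])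
    moreover have "\<And>s'. 0 \<le> V (s, a) s' \<and> V (s, a) s' \<le> real H"
      using selV by (simp add: V_def Vset_def)
    ultimately show ?thesis
      using h nn_integral_exp_hoeffding_exponent_le_1[of "V (s, a)" "real H"] by (simp add: F_def)
  qed
  then have "(\<integral>\<^sup>+e. F (e ! (h - 1)) (fst (e ! Suc (h - 1))) \<partial>roll pol P 1 H s1) \<le> 1"
    using h by (intro nn_integral_roll_transition_le_1) auto
  then show ?thesis
    using h mult_left_mono[of _ 1 "ennreal (exp (zsum \<phi> lam sel \<theta> (real H) x (hist_fn hs) h (Suc n)))"]
    by (simp add: split nn_integral_cmult)
qed

lemma nn_integral_exp_zsum_le_1:
  fixes \<phi> :: "'s::finite \<Rightarrow> 'a::finite \<Rightarrow> 's \<Rightarrow> real^'d::finite"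
    and P :: "nat \<Rightarrow> 's \<Rightarrow> 'a \<Rightarrow> 's pmf"
  assumes mix: "\<forall>s a s'. pmf (P h s a) s' = \<theta> h \<bullet> \<phi> s a s'"
    and selV: "\<forall>k h M s a. sel k h M s a \<in> Vset H"
    and h: "1 \<le> h" "h \<le> H"
  shows "k \<le> Suc n \<Longrightarrow> (\<integral>\<^sup>+hs. ennreal (exp (zsum \<phi> lam sel \<theta> (real H) x (hist_fn hs) h k))
           \<partial>histp \<phi> P s1 H lam beta sel pick n) \<le> 1"
proof (induction n arbitrary: k)
  case 0
  then show ?case
    by (simp add: zsum_def)
next
  case (Suc n)
  let ?Z = "\<lambda>hs k. ennreal (exp (zsum \<phi> lam sel \<theta> (real H) x (hist_fn hs) h k))"
  let ?roll = "\<lambda>hs. roll (polk \<phi> H lam beta sel pick (hist_fn hs) (Suc n)) P 1 H s1"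
  have step: "(\<integral>\<^sup>+e. ?Z (hs @ [e]) k \<partial>?roll hs) \<le> ?Z hs (min k (Suc n))"
    if "hs \<in> set_pmf (histp \<phi> P s1 H lam beta sel pick n)" for hs
  proof -
    have len: "length hs = n"
      using length_histp[OF that] .
    show ?thesis
    proof (cases "k \<le> Suc n")
      case True
      have "?Z (hs @ [e]) k = ?Z hs k" for e
        using zsum_cong[of n "hist_fn (hs @ [e])" "hist_fn hs", OF hist_fn_append[OF len] True]
        by simp
      then show ?thesis
        using True by (simp add: measure_pmf.emeasure_space_1)
    next
      case False
      then have "k = Suc (Suc n)"
        using Suc.prems by simp
      then show ?thesis
        using nn_integral_exp_zsum_append_le[where P = P and h = h and \<theta> = \<theta>, OF mix selV h len]
        by simp
    qed
  qed
  have "(\<integral>\<^sup>+hs. ?Z hs k \<partial>histp \<phi> P s1 H lam beta sel pick (Suc n))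
        = (\<integral>\<^sup>+hs. \<integral>\<^sup>+e. ?Z (hs @ [e]) k \<partial>?roll hs \<partial>histp \<phi> P s1 H lam beta sel pick n)"
    by simp
  also have "\<dots> \<le> (\<integral>\<^sup>+hs. ?Z hs (min k (Suc n)) \<partial>histp \<phi> P s1 H lam beta sel pick n)"
    using step by (intro nn_integral_mono_AE) (simp add: AE_measure_pmf_iff)
  also have "\<dots> \<le> 1"
    by (rule Suc.IH) simp
  finally show ?case .
qed

lemma prob_zsum_lt_on_grid:
  fixes \<phi> :: "'s::finite \<Rightarrow> 'a::finite \<Rightarrow> 's \<Rightarrow> real^'d::finite"
    and P :: "nat \<Rightarrow> 's \<Rightarrow> 'a \<Rightarrow> 's pmf"
  assumes mixture: "\<forall>h\<in>{1..H}. \<forall>s a s'. pmf (P h s a) s' = \<theta> h \<bullet> \<phi> s a s'"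
    and selV: "\<forall>k h M s a. sel k h M s a \<in> Vset H" and N: "finite N"
  shows "1 - real (H * K * card N) * exp (- c)
         \<le> measure_pmf.prob (histp \<phi> P s1 H lam beta sel pick K)
             {hs. \<forall>(h, k, x)\<in>{1..H} \<times> {1..K} \<times> N. zsum \<phi> lam sel \<theta> (real H) x (hist_fn hs) h k < c}"
proof -
  let ?p = "histp \<phi> P s1 H lam beta sel pick K"
  let ?Z = "\<lambda>(h, k, x) hs. zsum \<phi> lam sel \<theta> (real H) x (hist_fn hs) h k"
  have "measure_pmf.prob ?p {hs. \<not> ?Z i hs < c} \<le> exp (- c)"
    if "i \<in> {1..H} \<times> {1..K} \<times> N" for i
  proof -
    obtain h k x where i: "i = (h, k, x)" and h: "h \<in> {1..H}" and k: "k \<le> Suc K"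
      using \<open>i \<in> {1..H} \<times> {1..K} \<times> N\<close> by auto
    have "(\<integral>\<^sup>+hs. ennreal (exp (?Z i hs)) \<partial>?p) \<le> 1"
      unfolding i using mixture h
      by (auto intro!: nn_integral_exp_zsum_le_1[where P = P and h = h and \<theta> = \<theta>, OF _ selV _ _ k])
    then show ?thesis
      by (simp add: not_less prob_ge_le_exp_neg)
  qed
  then have "1 - real (card ({1..H} \<times> {1..K} \<times> N)) * exp (- c)
             \<le> measure_pmf.prob ?p {hs. \<forall>i\<in>{1..H} \<times> {1..K} \<times> N. ?Z i hs < c}"
    by (intro prob_Ball_ge_union_bound) (use N in auto)
  then show ?thesis
    by (simp add: card_cartesian_product case_prod_beta)
qed


section \<open>The confidence bound\<close>

lemma norm_phiV_le:
  assumes phi_bd: "\<forall>s a V. (\<forall>x. 0 \<le> V x \<and> V x \<le> 1) \<longrightarrow> norm (phiV \<phi> s a V) \<le> 1"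
    and V: "V \<in> Vset H"
  shows "norm (phiV \<phi> s a V) \<le> real H"
proof (cases "H = 0")
  case True
  then have "V = (\<lambda>_. 0)"
    using V by (auto simp: Vset_def intro: antisym)
  then show ?thesis
    by (simp add: phiV_def)
next
  case False
  have "phiV \<phi> s a V = real H *\<^sub>R phiV \<phi> s a (\<lambda>x. V x / real H)"
    using False by (simp add: phiV_def scaleR_sum_right)
  moreover have "norm (phiV \<phi> s a (\<lambda>x. V x / real H)) \<le> 1"
    using phi_bd V False by (auto simp: Vset_def)
  ultimately show ?thesis
    by (simp add: mult_left_le)
qed

lemma sum_pmf_mult_bounds:
  fixes p :: "'s::finite pmf"
  assumes "V \<in> Vset H"
  shows "0 \<le> (\<Sum>s\<in>UNIV. pmf p s * V s)" and "(\<Sum>s\<in>UNIV. pmf p s * V s) \<le> real H"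
proof -
  show "0 \<le> (\<Sum>s\<in>UNIV. pmf p s * V s)"
    using assms by (auto simp: Vset_def intro!: sum_nonneg)
  have "(\<Sum>s\<in>UNIV. pmf p s * V s) \<le> (\<Sum>s\<in>UNIV. pmf p s * real H)"
    using assms by (auto simp: Vset_def intro!: sum_mono mult_left_mono)
  then show "(\<Sum>s\<in>UNIV. pmf p s * V s) \<le> real H"
    by (simp add: sum_distrib_right[symmetric] sum_pmf_eq_1)
qed

lemma norm_feat_le:
  assumes "\<forall>s a V. (\<forall>x. 0 \<le> V x \<and> V x \<le> 1) \<longrightarrow> norm (phiV \<phi> s a V) \<le> 1"
    and "\<forall>k h M s a. sel k h M s a \<in> Vset H"
  shows "norm (feat \<phi> lam sel ep h t) \<le> real H"
  unfolding feat_def phik_def tV_def using assms by (intro norm_phiV_le) auto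

lemma abs_noise_le:
  fixes \<phi> :: "'s::finite \<Rightarrow> 'a \<Rightarrow> 's \<Rightarrow> real^'d::finite"
  assumes mix: "\<forall>s a s'. pmf (P h s a) s' = \<theta> h \<bullet> \<phi> s a s'"
    and selV: "\<forall>k h M s a. sel k h M s a \<in> Vset H"
  shows "\<bar>noise \<phi> lam sel \<theta> ep h t\<bar> \<le> real H"
proof -
  let ?V = "tV \<phi> lam sel ep t h (st ep t h) (act ep t h)"
  have V: "?V \<in> Vset H"
    using selV by (simp add: tV_def)
  then have "0 \<le> target \<phi> lam sel ep h t \<and> target \<phi> lam sel ep h t \<le> real H"
    by (simp add: target_def Vset_def)
  moreover have "\<theta> h \<bullet> feat \<phi> lam sel ep h t = (\<Sum>s'\<in>UNIV. pmf (P h (st ep t h) (act ep t h)) s' * ?V s')"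
    unfolding feat_def phik_def by (rule inner_phiV_eq_sum_pmf[OF mix])
  ultimately show ?thesis
    using sum_pmf_mult_bounds[OF V, of "P h (st ep t h) (act ep t h)"]
    by (simp add: noise_def abs_le_iff)
qed

lemma abs_thetahat_error_le_bonus:
  fixes \<phi> :: "'s::finite \<Rightarrow> 'a::finite \<Rightarrow> 's \<Rightarrow> real^'d::finite"
  assumes mix: "\<forall>s a s'. pmf (P h s a) s' = \<theta> h \<bullet> \<phi> s a s'"
    and sel_argmax: "\<forall>k h M s a. sel k h M s a \<in> Vset H \<and>
                       (\<forall>V\<in>Vset H. wnorm (matrix_inv M) (phiV \<phi> s a V)
                                   \<le> wnorm (matrix_inv M) (phiV \<phi> s a (sel k h M s a)))"
    and phi_bd: "\<forall>s a V. (\<forall>x. 0 \<le> V x \<and> V x \<le> 1) \<longrightarrow> norm (phiV \<phi> s a V) \<le> 1"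
    and theta: "sqrt lam * norm (\<theta> h) \<le> 1" and lam: "0 < lam" and H: "0 < H" and k: "k \<le> K"
    and eps: "0 < eps" and radius: "4 * sqrt (real K / lam) / real H \<le> real_of_int J * eps"
    and spacing: "(real H)\<^sup>2 / 8 * (lam + real K * (real H)\<^sup>2) * (eps / 2)\<^sup>2 \<le> 1 / 2"
    and below: "\<forall>x\<in>grid eps J. zsum \<phi> lam sel \<theta> (real H) x ep h k < c"
    and beta: "(real H)\<^sup>2 / 2 * (c + real CARD('d) / 2) \<le> (beta - 1)\<^sup>2" "1 \<le> beta"
    and V: "V \<in> Vset H"
  shows "\<bar>thetahat \<phi> lam sel ep k h \<bullet> phiV \<phi> s a V - \<theta> h \<bullet> phiV \<phi> s a V\<bar>
         \<le> bonus \<phi> lam beta sel ep k h s a"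
proof -
  let ?L = "Lam \<phi> lam sel ep k h" and ?f = "feat \<phi> lam sel ep h"
  let ?\<eta> = "noise \<phi> lam sel \<theta> ep h" and ?wn = "wnorm (matrix_inv (Lam \<phi> lam sel ep k h))"
  interpret ridge_gram ?L lam ?f "{1..<k}"
    by unfold_locales (simp_all add: lam Lam_mult_vec)
  have selV: "\<forall>k h M s a. sel k h M s a \<in> Vset H"
    using sel_argmax by blast
  have "thetahat \<phi> lam sel ep k h = matrix_inv ?L *v (\<Sum>t\<in>{1..<k}. (?f t \<bullet> \<theta> h + ?\<eta> t) *\<^sub>R ?f t)"
    by (simp add: thetahat_def noise_def feat_def target_def inner_commute)
  then have "\<bar>thetahat \<phi> lam sel ep k h \<bullet> phiV \<phi> s a V - \<theta> h \<bullet> phiV \<phi> s a V\<bar>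
             \<le> (?wn (\<Sum>t\<in>{1..<k}. ?\<eta> t *\<^sub>R ?f t) + lam * ?wn (\<theta> h)) * ?wn (phiV \<phi> s a V)"
    using abs_ridge_error_le[of "\<theta> h" ?\<eta> "phiV \<phi> s a V"] by (simp add: inner_diff_left)
  also have "\<dots> \<le> beta * ?wn (phik \<phi> lam sel ep k h s a)"
  proof (intro mult_mono)
    have "(?wn (\<Sum>t\<in>{1..<k}. ?\<eta> t *\<^sub>R ?f t))\<^sup>2 < (real H)\<^sup>2 / 2 * (c + real CARD('d) / 2)"
      by (rule wnorm_sum_sq_lt_of_grid)
        (use H k eps radius spacing below abs_noise_le[where P = P and h = h and \<theta> = \<theta>, OF mix selV]
          norm_feat_le[OF phi_bd selV] in \<open>simp_all add: zsum_def\<close>)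
    then have "(?wn (\<Sum>t\<in>{1..<k}. ?\<eta> t *\<^sub>R ?f t))\<^sup>2 \<le> (beta - 1)\<^sup>2"
      using beta(1) by linarith
    then have "?wn (\<Sum>t\<in>{1..<k}. ?\<eta> t *\<^sub>R ?f t) \<le> beta - 1"
      by (rule power2_le_imp_le) (use beta(2) in simp)
    moreover have "lam * ?wn (\<theta> h) \<le> 1"
      using lam_wnorm_matrix_inv_le[of "\<theta> h"] theta by linarith
    ultimately show "?wn (\<Sum>t\<in>{1..<k}. ?\<eta> t *\<^sub>R ?f t) + lam * ?wn (\<theta> h) \<le> beta"
      by linarith
    show "?wn (phiV \<phi> s a V) \<le> ?wn (phik \<phi> lam sel ep k h s a)"
      using sel_argmax V by (simp add: phik_def tV_def)
  qed (use beta wnorm_matrix_inv_nonneg in auto)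
  finally show ?thesis
    by (simp add: bonus_def)
qed

lemma grid_spacing:
  fixes H K :: nat and B lam :: real
  assumes B: "1 \<le> B" and H: "1 \<le> H" and lamB: "lam * B\<^sup>2 = 1"
  defines "Z \<equiv> lam + real K * (real H)\<^sup>2"
  defines "eps \<equiv> 4 / (real H * sqrt Z)" and "J \<equiv> \<lceil>sqrt (real K / lam) * sqrt Z\<rceil>"
  shows "0 < eps" and "4 * sqrt (real K / lam) / real H \<le> real_of_int J * eps"
    and "(real H)\<^sup>2 / 8 * Z * (eps / 2)\<^sup>2 \<le> 1 / 2"
    and "0 \<le> J" and "real_of_int J \<le> 2 * real K * real H * B + 1"
proof -
  have lam: "0 < lam"
    using lamB mult_nonpos_nonneg[of lam "B\<^sup>2"] by fastforce
  have Z: "0 < Z"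
    using lam by (simp add: Z_def add_pos_nonneg)
  show eps: "0 < eps"
    using H Z by (simp add: eps_def)
  have "4 * sqrt (real K / lam) / real H = sqrt (real K / lam) * sqrt Z * eps"
    using H Z by (simp add: eps_def field_simps)
  also have "\<dots> \<le> real_of_int J * eps"
    using eps by (intro mult_right_mono) (auto simp: J_def)
  finally show "4 * sqrt (real K / lam) / real H \<le> real_of_int J * eps" .
  show "(real H)\<^sup>2 / 8 * Z * (eps / 2)\<^sup>2 \<le> 1 / 2"
    using H Z by (simp add: eps_def power_divide power_mult_distrib field_simps)
  have "0 \<le> sqrt (real K / lam) * sqrt Z"
    using lam Z by simp
  then show "0 \<le> J"
    unfolding J_def by linarith
  have "B\<^sup>2 = 1 / lam"
    using lamB lam by (simp add: field_simps)
  then have "real K / lam * Z = real K + (B * real K * real H)\<^sup>2"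
    unfolding Z_def power_mult_distrib using lam by (simp add: field_simps power2_eq_square)
  then have "sqrt (real K / lam) * sqrt Z = sqrt (real K + (B * real K * real H)\<^sup>2)"
    by (simp add: real_sqrt_mult[symmetric])
  also have "\<dots> \<le> sqrt ((2 * real K * real H * B)\<^sup>2)"
  proof (rule real_sqrt_le_mono)
    have "1 \<le> B * real H"
      using mult_mono[of 1 B 1 "real H"] B H by simp
    then have "1 \<le> (B * real H)\<^sup>2"
      by (simp add: one_le_power)
    have "real K \<le> real K * real K"
      using le_square[of K] by (metis of_nat_le_iff of_nat_mult)
    also have "\<dots> \<le> real K * real K * (B * real H)\<^sup>2"
      using mult_left_mono[OF \<open>1 \<le> (B * real H)\<^sup>2\<close>, of "real K * real K"] by simp
    also have "\<dots> = (B * real K * real H)\<^sup>2"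
      by (simp add: power_mult_distrib power2_eq_square algebra_simps)
    finally show "real K + (B * real K * real H)\<^sup>2 \<le> (2 * real K * real H * B)\<^sup>2"
      by (simp add: power_mult_distrib algebra_simps)
  qed
  also have "\<dots> = 2 * real K * real H * B"
    using B by simp
  finally show "real_of_int J \<le> 2 * real K * real H * B + 1"
    unfolding J_def by linarith
qed

lemma grid_size_le_sq:
  fixes H K :: nat and B lam \<delta> :: real and J :: int
  assumes B: "1 \<le> B" and H: "1 \<le> H" and K: "1 \<le> K" and lamB: "lam * B\<^sup>2 = 1"
    and \<delta>: "0 < \<delta>" "\<delta> \<le> 1" and J: "0 \<le> J" "real_of_int J \<le> 2 * real K * real H * B + 1"
  shows "2 * (real H * real K / \<delta>) * real (nat (2 * J + 1)) \<le> (4 * real H ^ 3 * real K / (lam * \<delta>))\<^sup>2"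
proof -
  define A where "A = (real H * real K)\<^sup>2 * B / \<delta>"
  have "1 \<le> real H * real K"
    using H K mult_mono[of 1 "real H" 1 "real K"] by simp
  then have "1 \<le> real K * real H * B"
    using B mult_mono[of 1 "real H * real K" 1 B] by (simp add: mult.commute)
  then have M: "real (nat (2 * J + 1)) \<le> 7 * (real K * real H * B)"
    using J by simp
  have "2 * (real H * real K) * real (nat (2 * J + 1)) \<le> 14 * (real H * real K)\<^sup>2 * B"
    using mult_left_mono[OF M, of "2 * (real H * real K)"]
    by (simp add: power2_eq_square algebra_simps)
  then have "2 * (real H * real K / \<delta>) * real (nat (2 * J + 1)) \<le> 14 * A"
    using divide_right_mono[of _ _ \<delta>] \<delta> by (simp add: A_def)
  also have "\<dots> \<le> 16 * A * (real H ^ 4 * B ^ 3 / \<delta>)"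
  proof -
    have R: "1 \<le> real H ^ 4 * B ^ 3 / \<delta>"
      using H B \<delta> by (simp add: le_divide_eq one_le_power order_trans[OF _ mult_mono[of 1 _ 1]])
    have "0 \<le> A"
      using B \<delta> by (simp add: A_def)
    then show ?thesis
      using mult_left_mono[OF R, of "16 * A"] by linarith
  qed
  also have "\<dots> = (4 * real H ^ 3 * real K / (lam * \<delta>))\<^sup>2"
  proof -
    have "0 < lam"
      using lamB mult_nonpos_nonneg[of lam "B\<^sup>2"] by fastforce
    then have "B\<^sup>2 = 1 / lam"
      using lamB by (simp add: field_simps)
    then have Y: "4 * real H ^ 3 * real K / (lam * \<delta>) = 4 * real H ^ 3 * real K * B\<^sup>2 / \<delta>"
      by simp
    show ?thesis
      unfolding Y by (simp add: A_def power2_eq_square power_mult_distrib field_simps eval_nat_numeral)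
  qed
  finally show ?thesis .
qed

text \<open>The slack \<open>CARD('d)/2\<close> from rounding to the grid is absorbed using \<open>ln 2 \<ge> 1/2\<close>.\<close>

lemma grid_log_bound:
  fixes H K d :: nat and B lam \<delta> :: real and J :: int
  assumes B: "1 \<le> B" and H: "1 \<le> H" and K: "1 \<le> K" and d: "1 \<le> d" and lamB: "lam * B\<^sup>2 = 1"
    and \<delta>: "0 < \<delta>" "\<delta> \<le> 1" and J: "0 \<le> J" "real_of_int J \<le> 2 * real K * real H * B + 1"
  shows "(real H)\<^sup>2 / 2 * (ln (real (H * K * nat (2 * J + 1) ^ d) / \<delta>) + real d / 2)
         \<le> (real H * sqrt (real d * ln (4 * real H ^ 3 * real K / (lam * \<delta>))))\<^sup>2"
    and "0 \<le> ln (4 * real H ^ 3 * real K / (lam * \<delta>))"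
proof -
  define M where "M = real (nat (2 * J + 1))"
  define X where "X = real H * real K / \<delta>"
  define Y where "Y = 4 * real H ^ 3 * real K / (lam * \<delta>)"
  have XM: "2 * X * M \<le> Y\<^sup>2"
    unfolding X_def M_def Y_def by (rule grid_size_le_sq[OF assms(1-3,5-)])
  have M: "1 \<le> M"
    using J by (simp add: M_def)
  have X: "1 \<le> X"
    using H K \<delta> mult_mono[of 1 "real H" 1 "real K"] by (simp add: X_def le_divide_eq)
  have "1\<^sup>2 \<le> Y\<^sup>2"
    using XM X M mult_mono[of 1 X 1 M] by simp
  then have Y: "1 \<le> Y"
    by (rule power2_le_imp_le) (use lamB \<delta> mult_nonpos_nonneg[of lam "B\<^sup>2"] in \<open>force simp: Y_def\<close>)
  have "ln X + ln M + 1 / 2 \<le> ln (2 * X * M)"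
    using X M ln2_ge_two_thirds by (simp add: ln_mult)
  also have "\<dots> \<le> ln (Y\<^sup>2)"
    using XM X M by (intro ln_mono) auto
  also have "\<dots> = 2 * ln Y"
    using Y by (simp add: ln_realpow)
  finally have XMY: "ln X + ln M + 1 / 2 \<le> 2 * ln Y" .
  have "real (H * K * nat (2 * J + 1) ^ d) / \<delta> = X * M ^ d"
    by (simp add: M_def X_def)
  then have "ln (real (H * K * nat (2 * J + 1) ^ d) / \<delta>) = ln X + real d * ln M"
    using X M by (simp add: ln_mult ln_realpow)
  moreover have "ln X \<le> real d * ln X"
    using X d by (simp add: mult_le_cancel_right1)
  ultimately have "ln (real (H * K * nat (2 * J + 1) ^ d) / \<delta>) + real d / 2
                   \<le> real d * (ln X + ln M + 1 / 2)"
    by (simp add: algebra_simps)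
  also have "\<dots> \<le> real d * (2 * ln Y)"
    using XMY by (simp add: mult_left_mono)
  finally have "(real H)\<^sup>2 / 2 * (ln (real (H * K * nat (2 * J + 1) ^ d) / \<delta>) + real d / 2)
                \<le> (real H)\<^sup>2 / 2 * (real d * (2 * ln Y))"
    by (rule mult_left_mono) simp
  also have "\<dots> = (real H * sqrt (real d * ln Y))\<^sup>2"
    using Y by (simp add: power_mult_distrib)
  finally show "(real H)\<^sup>2 / 2 * (ln (real (H * K * nat (2 * J + 1) ^ d) / \<delta>) + real d / 2)
         \<le> (real H * sqrt (real d * ln (4 * real H ^ 3 * real K / (lam * \<delta>))))\<^sup>2"
    by (simp add: Y_def)
  show "0 \<le> ln (4 * real H ^ 3 * real K / (lam * \<delta>))"
    using Y by (simp add: Y_def)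
qed

lemma grid_parameters:
  fixes H K :: nat and B lam \<delta> beta :: real
  assumes B: "1 \<le> B" and H: "1 \<le> H" and K: "1 \<le> K" and lam_def: "lam = 1 / B\<^sup>2"
    and delta: "0 < \<delta>" "\<delta> < 1"
    and beta_def: "beta = real H * sqrt (real CARD('d) * ln (4 * real H ^ 3 * real K / (lam * \<delta>)))
                          + sqrt lam * B"
  obtains eps J c
  where "0 < eps" "4 * sqrt (real K / lam) / real H \<le> real_of_int J * eps"
    and "(real H)\<^sup>2 / 8 * (lam + real K * (real H)\<^sup>2) * (eps / 2)\<^sup>2 \<le> 1 / 2"
    and "real (H * K * card (grid eps J :: (real^'d::finite) set)) * exp (- c) \<le> \<delta>"
    and "(real H)\<^sup>2 / 2 * (c + real CARD('d) / 2) \<le> (beta - 1)\<^sup>2" "1 \<le> beta"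
proof -
  have lamB: "lam * B\<^sup>2 = 1" and sqrt_lam: "sqrt lam * B = 1"
    using B by (simp_all add: lam_def real_sqrt_divide)
  define Z where "Z = lam + real K * (real H)\<^sup>2"
  define eps where "eps = 4 / (real H * sqrt Z)"
  define J where "J = \<lceil>sqrt (real K / lam) * sqrt Z\<rceil>"
  note spacing = grid_spacing[OF B H lamB, of K, folded Z_def, folded eps_def J_def]
  define N where "N = real (H * K * nat (2 * J + 1) ^ CARD('d))"
  define c where "c = ln (N / \<delta>)"
  have N: "0 < N"
    using H K spacing(4) by (simp add: N_def)
  have "H * K * card (grid eps J :: (real^'d) set) \<le> H * K * nat (2 * J + 1) ^ CARD('d)"
    using card_grid_le[of eps J, where 'd = 'd] by simp
  then have "real (H * K * card (grid eps J :: (real^'d) set)) \<le> N"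
    unfolding N_def by (simp only: of_nat_le_iff)
  then have "real (H * K * card (grid eps J :: (real^'d) set)) * exp (- c) \<le> N * exp (- c)"
    by (rule mult_right_mono) simp
  also have "\<dots> = \<delta>"
    using N delta by (simp add: c_def exp_minus)
  finally have "real (H * K * card (grid eps J :: (real^'d) set)) * exp (- c) \<le> \<delta>" .
  moreover have "(real H)\<^sup>2 / 2 * (c + real CARD('d) / 2) \<le> (beta - 1)\<^sup>2" "1 \<le> beta"
    using grid_log_bound[OF B H K _ lamB delta(1) _ spacing(4,5), of "CARD('d)"] delta
    by (simp_all add: beta_def sqrt_lam c_def N_def)
  ultimately show ?thesis
    using that spacing(1-3) by (simp add: Z_def)
qed

lemma one_le_norm_theta:
  assumes "\<forall>s a s'. pmf (Q s a) s' = \<theta> \<bullet> \<phi> s a s'"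
    and phi_bd: "\<forall>s a V. (\<forall>x. 0 \<le> V x \<and> V x \<le> 1) \<longrightarrow> norm (phiV \<phi> s a V) \<le> 1"
  shows "1 \<le> norm \<theta>"
proof -
  have "1 = \<theta> \<bullet> phiV \<phi> undefined undefined (\<lambda>_. 1)"
    using inner_phiV_eq_sum_pmf[OF assms(1)] by (simp add: sum_pmf_eq_1)
  also have "\<dots> \<le> norm \<theta> * norm (phiV \<phi> undefined undefined (\<lambda>_. 1))"
    by (rule norm_cauchy_schwarz)
  also have "\<dots> \<le> norm \<theta>"
    using phi_bd by (simp add: mult_left_le)
  finally show ?thesis .
qed

lemma prob_confidence_event:
  fixes \<phi> :: "'s::finite \<Rightarrow> 'a::finite \<Rightarrow> 's \<Rightarrow> real^'d::finite"
    and P :: "nat \<Rightarrow> 's \<Rightarrow> 'a \<Rightarrow> 's pmf"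
  assumes B_pos: "0 < B"
    and delta: "0 < \<delta>" "\<delta> < 1"
    and mixture: "\<forall>h\<in>{1..H}. \<forall>s a s'. pmf (P h s a) s' = \<theta> h \<bullet> \<phi> s a s'"
    and theta_bd: "\<forall>h\<in>{1..H}. norm (\<theta> h) \<le> B"
    and phi_bd: "\<forall>s a V. (\<forall>x. 0 \<le> V x \<and> V x \<le> 1) \<longrightarrow> norm (phiV \<phi> s a V) \<le> 1"
    and lam_def: "lam = 1 / B\<^sup>2"
    and beta_def: "beta = real H * sqrt (real CARD('d) * ln (4 * real H ^ 3 * real K / (lam * \<delta>)))
                          + sqrt lam * B"
    and sel_argmax: "\<forall>k h M s a. sel k h M s a \<in> Vset H \<and>
                       (\<forall>V\<in>Vset H. wnorm (matrix_inv M) (phiV \<phi> s a V)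
                                   \<le> wnorm (matrix_inv M) (phiV \<phi> s a (sel k h M s a)))"
  shows "1 - \<delta> \<le> measure_pmf.prob (histp \<phi> P s1 H lam beta sel pick K)
           {hs. \<forall>k\<in>{1..K}. \<forall>h\<in>{1..H}. \<forall>s a. \<forall>V\<in>Vset H.
              \<bar>thetahat \<phi> lam sel (hist_fn hs) k h \<bullet> phiV \<phi> s a V - \<theta> h \<bullet> phiV \<phi> s a V\<bar>
              \<le> bonus \<phi> lam beta sel (hist_fn hs) k h s a}"
proof (cases "H = 0 \<or> K = 0")
  case True
  then show ?thesis
    using delta by (auto simp: measure_pmf.prob_space[unfolded space_measure_pmf])
next
  case False
  then have H: "1 \<le> H" and K: "1 \<le> K"
    by auto
  have "1 \<le> norm (\<theta> 1)"
    using H by (intro one_le_norm_theta[OF bspec[OF mixture] phi_bd]) simp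
  moreover have "norm (\<theta> 1) \<le> B"
    using theta_bd H by simp
  ultimately have B: "1 \<le> B"
    by linarith
  have lam: "0 < lam" and sqrt_lam: "sqrt lam * B = 1"
    using B_pos by (simp_all add: lam_def real_sqrt_divide)
  obtain eps J c where spacing: "0 < eps" "4 * sqrt (real K / lam) / real H \<le> real_of_int J * eps"
      "(real H)\<^sup>2 / 8 * (lam + real K * (real H)\<^sup>2) * (eps / 2)\<^sup>2 \<le> 1 / 2"
    and card: "real (H * K * card (grid eps J :: (real^'d) set)) * exp (- c) \<le> \<delta>"
    and beta: "(real H)\<^sup>2 / 2 * (c + real CARD('d) / 2) \<le> (beta - 1)\<^sup>2" "1 \<le> beta"
    using grid_parameters[OF B H K lam_def delta beta_def] by blast
  from card have "1 - \<delta> \<le> 1 - real (H * K * card (grid eps J :: (real^'d) set)) * exp (- c)"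
    by simp
  also have "\<dots> \<le> measure_pmf.prob (histp \<phi> P s1 H lam beta sel pick K)
    {hs. \<forall>(h, k, x)\<in>{1..H} \<times> {1..K} \<times> grid eps J. zsum \<phi> lam sel \<theta> (real H) x (hist_fn hs) h k < c}"
    using mixture sel_argmax finite_grid by (intro prob_zsum_lt_on_grid) auto
  also have "\<dots> \<le> measure_pmf.prob (histp \<phi> P s1 H lam beta sel pick K)
           {hs. \<forall>k\<in>{1..K}. \<forall>h\<in>{1..H}. \<forall>s a. \<forall>V\<in>Vset H.
              \<bar>thetahat \<phi> lam sel (hist_fn hs) k h \<bullet> phiV \<phi> s a V - \<theta> h \<bullet> phiV \<phi> s a V\<bar>
              \<le> bonus \<phi> lam beta sel (hist_fn hs) k h s a}"
  proof (intro measure_pmf.finite_measure_mono subsetI CollectI ballI allI)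
    fix hs k h s a and V :: "'s \<Rightarrow> real"
    assume below: "hs \<in> {hs. \<forall>(h, k, x)\<in>{1..H} \<times> {1..K} \<times> grid eps J.
                            zsum \<phi> lam sel \<theta> (real H) x (hist_fn hs) h k < c}"
      and k: "k \<in> {1..K}" and h: "h \<in> {1..H}" and V: "V \<in> Vset H"
    have "sqrt lam * norm (\<theta> h) \<le> sqrt lam * B"
      using theta_bd h lam by (intro mult_left_mono) auto
    then have "sqrt lam * norm (\<theta> h) \<le> 1"
      using sqrt_lam by simp
    then show "\<bar>thetahat \<phi> lam sel (hist_fn hs) k h \<bullet> phiV \<phi> s a V - \<theta> h \<bullet> phiV \<phi> s a V\<bar>
               \<le> bonus \<phi> lam beta sel (hist_fn hs) k h s a"
      by (rule abs_thetahat_error_le_bonus[where P = P and h = h and \<theta> = \<theta>, OF bspec[OF mixture h] sel_argmax phi_bd _ lam _ _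
            spacing(1,2) _ _ beta V])
        (use H k h spacing(3) below in auto)
  qed simp
  finally show ?thesis .
qed


section \<open>Optimism\<close>

lemma Max_range_mono:
  fixes f g :: "'a::finite \<Rightarrow> real"
  assumes "\<And>a. f a \<le> g a"
  shows "Max (range f) \<le> Max (range g)"
proof -
  have "Max (range f) \<in> range f"
    by (rule Max_in) auto
  then obtain a where "Max (range f) = f a"
    by blast
  also have "\<dots> \<le> g a"
    by (rule assms)
  also have "\<dots> \<le> Max (range g)"
    by (rule Max_ge) auto
  finally show ?thesis .
qed

lemma VA_le_H: "VA \<phi> H lam beta sel ep k n h s \<le> real H"
  by (cases n) (simp_all add: Max_le_iff)

lemma optimistic_backup:
  fixes \<phi> :: "'s::finite \<Rightarrow> 'a::finite \<Rightarrow> 's \<Rightarrow> real^'d::finite" and s :: 's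
  assumes mix: "\<forall>s a s'. pmf (P h s a) s' = \<theta> h \<bullet> \<phi> s a s'"
    and conf: "\<forall>s a. \<forall>V\<in>Vset H.
      \<bar>thetahat \<phi> lam sel ep k h \<bullet> phiV \<phi> s a V - \<theta> h \<bullet> phiV \<phi> s a V\<bar> \<le> bonus \<phi> lam beta sel ep k h s a"
    and V: "\<And>s'. 0 \<le> Vs s' \<and> Vs s' \<le> Vn s'" and Vn: "\<And>s'. Vn s' \<le> real H"
  defines "backup \<equiv> \<lambda>a. min (Rk \<phi> lam beta sel ep k h s a + (\<Sum>s'\<in>UNIV. pmf (P h s a) s' * Vs s')) (real H)"
  shows "0 \<le> Max (range backup)"
    and "Max (range backup) \<le> Max (range (\<lambda>a. min (thetahat \<phi> lam sel ep k h \<bullet> phiV \<phi> s a Vn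
           + Rk \<phi> lam beta sel ep k h s a + bonus \<phi> lam beta sel ep k h s a) (real H)))"
proof -
  have conf_s: "\<bar>thetahat \<phi> lam sel ep k h \<bullet> phiV \<phi> s a W - \<theta> h \<bullet> phiV \<phi> s a W\<bar>
                 \<le> bonus \<phi> lam beta sel ep k h s a" if "W \<in> Vset H" for W a
    using conf that by blast
  have "Vn \<in> Vset H"
    using V Vn by (auto simp: Vset_def intro: order_trans)
  then have bonus: "\<theta> h \<bullet> phiV \<phi> s a Vn
                    \<le> thetahat \<phi> lam sel ep k h \<bullet> phiV \<phi> s a Vn + bonus \<phi> lam beta sel ep k h s a" for a
    using conf_s[of Vn a] by linarith
  have R: "0 \<le> Rk \<phi> lam beta sel ep k h s a" for a
    using conf_s[of "\<lambda>_. 0" a] by (simp add: Rk_def Vset_def phiV_def)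
  have mean_le: "(\<Sum>s'\<in>UNIV. pmf (P h s a) s' * Vs s') \<le> \<theta> h \<bullet> phiV \<phi> s a Vn" for a
    using V inner_phiV_eq_sum_pmf[OF mix] by (auto intro!: sum_mono mult_left_mono)
  have "0 \<le> backup a" for a
    using V R[of a] by (simp add: backup_def sum_nonneg)
  then show "0 \<le> Max (range backup)"
    by (rule order_trans[OF _ Max_ge]) auto
  show "Max (range backup) \<le> Max (range (\<lambda>a. min (thetahat \<phi> lam sel ep k h \<bullet> phiV \<phi> s a Vn
           + Rk \<phi> lam beta sel ep k h s a + bonus \<phi> lam beta sel ep k h s a) (real H)))"
    unfolding backup_def
    by (intro Max_range_mono min.mono) (use mean_le bonus in \<open>auto intro: add_mono order_trans\<close>)
qed

lemma VsA_le_VA: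
  fixes \<phi> :: "'s::finite \<Rightarrow> 'a::finite \<Rightarrow> 's \<Rightarrow> real^'d::finite"
  assumes mixture: "\<forall>h\<in>{1..H}. \<forall>s a s'. pmf (P h s a) s' = \<theta> h \<bullet> \<phi> s a s'"
    and conf: "\<forall>h\<in>{1..H}. \<forall>s a. \<forall>V\<in>Vset H.
      \<bar>thetahat \<phi> lam sel ep k h \<bullet> phiV \<phi> s a V - \<theta> h \<bullet> phiV \<phi> s a V\<bar> \<le> bonus \<phi> lam beta sel ep k h s a"
  shows "h + n = H + 1 \<Longrightarrow> 1 \<le> h \<Longrightarrow>
    0 \<le> VsA P H (Rk \<phi> lam beta sel ep k) n h s
    \<and> VsA P H (Rk \<phi> lam beta sel ep k) n h s \<le> VA \<phi> H lam beta sel ep k n h s"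
proof (induction n arbitrary: h s)
  case 0
  then show ?case by simp
next
  case (Suc n)
  then have h: "h \<in> {1..H}"
    by auto
  have IH: "0 \<le> VsA P H (Rk \<phi> lam beta sel ep k) n (Suc h) s'
                 \<and> VsA P H (Rk \<phi> lam beta sel ep k) n (Suc h) s' \<le> VA \<phi> H lam beta sel ep k n (Suc h) s'"
    for s'
    using Suc by simp
  show ?case
    using optimistic_backup[where P = P and h = h and \<theta> = \<theta>
        and Vs = "VsA P H (Rk \<phi> lam beta sel ep k) n (Suc h)" and Vn = "VA \<phi> H lam beta sel ep k n (Suc h)",
        OF bspec[OF mixture h] bspec[OF conf h] IH VA_le_H]
    by simp
qed

text \<open>The tie-breaking rule \<open>pick\<close> is irrelevant: optimism holds whatever policy generated the
  data.\<close>

theorem lemma2: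
  fixes \<phi> :: "'s::finite \<Rightarrow> 'a::finite \<Rightarrow> 's \<Rightarrow> real^'d::finite"
    and P :: "nat \<Rightarrow> 's \<Rightarrow> 'a \<Rightarrow> 's pmf"
    and \<theta> :: "nat \<Rightarrow> real^'d"
    and s1 :: 's
    and H K :: nat
    and B \<delta> lam beta :: real
    and sel :: "nat \<Rightarrow> nat \<Rightarrow> real^'d^'d \<Rightarrow> 's \<Rightarrow> 'a \<Rightarrow> ('s \<Rightarrow> real)"
    and pick :: "nat \<Rightarrow> nat \<Rightarrow> 's \<Rightarrow> ('a \<Rightarrow> real) \<Rightarrow> 'a"
  assumes B_pos: "0 < B"
    and delta: "0 < \<delta>" "\<delta> < 1"
    and mixture: "\<forall>h\<in>{1..H}. \<forall>s a s'. pmf (P h s a) s' = \<theta> h \<bullet> \<phi> s a s'"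
    and theta_bd: "\<forall>h\<in>{1..H}. norm (\<theta> h) \<le> B"
    and phi_bd: "\<forall>s a V. (\<forall>x. 0 \<le> V x \<and> V x \<le> 1) \<longrightarrow> norm (phiV \<phi> s a V) \<le> 1"
    and lam_def: "lam = 1 / B\<^sup>2"
    and beta_def: "beta = real H * sqrt (real CARD('d) * ln (4 * real H ^ 3 * real K / (lam * \<delta>)))
                          + sqrt lam * B"
    and sel_argmax: "\<forall>k h M s a. sel k h M s a \<in> Vset H \<and>
                       (\<forall>V\<in>Vset H. wnorm (matrix_inv M) (phiV \<phi> s a V)
                                   \<le> wnorm (matrix_inv M) (phiV \<phi> s a (sel k h M s a)))"
    and pick_argmax: "\<forall>k h s f a. f a \<le> f (pick k h s f)"
  shows "measure_pmf.prob (histp \<phi> P s1 H lam beta sel pick K)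
           {hs. \<forall>k\<in>{1..K}. \<forall>h\<in>{1..H}. \<forall>s.
                  Vstar P H (Rk \<phi> lam beta sel (hist_fn hs) k) h s
                  \<le> Valg \<phi> H lam beta sel (hist_fn hs) k h s}
         \<ge> 1 - \<delta>"
proof -
  have "1 - \<delta> \<le> measure_pmf.prob (histp \<phi> P s1 H lam beta sel pick K)
           {hs. \<forall>k\<in>{1..K}. \<forall>h\<in>{1..H}. \<forall>s a. \<forall>V\<in>Vset H.
              \<bar>thetahat \<phi> lam sel (hist_fn hs) k h \<bullet> phiV \<phi> s a V - \<theta> h \<bullet> phiV \<phi> s a V\<bar>
              \<le> bonus \<phi> lam beta sel (hist_fn hs) k h s a}"
    by (rule prob_confidence_event[OF B_pos delta mixture theta_bd phi_bd lam_def beta_def sel_argmax])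
  also have "\<dots> \<le> measure_pmf.prob (histp \<phi> P s1 H lam beta sel pick K)
           {hs. \<forall>k\<in>{1..K}. \<forall>h\<in>{1..H}. \<forall>s.
                  Vstar P H (Rk \<phi> lam beta sel (hist_fn hs) k) h s
                  \<le> Valg \<phi> H lam beta sel (hist_fn hs) k h s}"
    using VsA_le_VA[OF mixture] by (intro measure_pmf.finite_measure_mono) (auto simp: Vstar_def Valg_def)
  finally show ?thesis .
qed

end
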